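(* Consider the coupled stochastic approximation scheme described in the context. Suppose: (A1-1) (i) for every $\theta\in\Theta$, $f(\cdot;\theta)$ is strongly convex on $X$ with constant $\mu_x>0$ and continuously differentiable with $L_x$-Lipschitz gradient in $x$; (ii) for every $x\in X$, $\nabla_x f(x;\theta)$ is Lipschitz continuous in $\theta$ with constant $L_\theta$; (iii) $g$ is strongly convex on $\Theta$ with constant $\mu_\theta>0$ and continuously differentiable with $C_\theta$-Lipschitz gradient; (A2-1) $\sum_{k=0}^\infty\gamma_{k,x}=\infty$, $\sum_{k=0}^\infty\gamma_{k,x}^2<\infty$, and $\gamma_{k,\theta}=\gamma_{k,x}L_\theta^2/(\mu_x\mu_\theta)$ for all $k$; (A3) almost surely for all $k$: $\mathbb{E}[w^k\mid\mathcal{F}_k]=0$, $\mathbb{E}[v^k\mid\mathcal{F}_k]=0$, $\mathbb{E}[\|w^k\|^2\mid\mathcal{F}_k]\le\nu_x^2$, $\mathbb{E}[\|v^k\|^2\mid\mathcal{F}_k]\le\nu_\theta^2$. Then $x^k\to x^*$ and $\theta^k\to\theta^*$ almost surely as $k\to\infty$, where $\theta^*$ is the unique minimizer of $g$ over $\Theta$ and $x^*$ is the unique minimizer of $f(\cdot;\theta^* )$ over $X$.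
   Context: $X\subseteq\mathbb{R}^n$, $\Theta\subseteq\mathbb{R}^m$ are nonempty closed convex sets; $\xi$ is a random vector on $(\Omega,\mathcal{F}_x,\mathbb{P}_x)$ and $\eta$ on $(\Lambda,\mathcal{F}_\theta,\mathbb{P}_\theta)$, and one works on the product probability space. $f(x;\theta):=\mathbb{E}[f(x;\theta,\xi)]$ and $g(\theta):=\mathbb{E}[g(\theta;\eta)]$. $\Pi_K$ is the Euclidean projection onto $K$. Coupled scheme: given $x^0\in X$, $\theta^0\in\Theta$ and positive steplengths $\gamma_{k,x},\gamma_{k,\theta}$, for $k\ge0$: $x^{k+1}=\Pi_X\big(x^k-\gamma_{k,x}(\nabla_x f(x^k;\theta^k)+w^k)\big)$, $\theta^{k+1}=\Pi_\Theta\big(\theta^k-\gamma_{k,\theta}(\nabla_\theta g(\theta^k)+v^k)\big)$, where $w^k=\nabla_x f(x^k;\theta^k,\xi^k)-\nabla_x f(x^k;\theta^k)$ and $v^k=\nabla_\theta g(\theta^k;\eta^k)-\nabla_\theta g(\theta^k)$ with samples $\xi^k,\eta^k$. $\mathcal{F}_k$ is the $\sigma$-field generated by $(x^0,\theta^0)$ and $(w^l,v^l)$, $l=0,\dots,k-1$. *)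

theory Defs
  imports "HOL-Analysis.Analysis" "HOL-Probability.Probability"
begin

definition strongly_convex_on :: "'a::real_normed_vector set \<Rightarrow> ('a \<Rightarrow> real) \<Rightarrow> real \<Rightarrow> bool" where
  "strongly_convex_on S f mu \<longleftrightarrow> convex S \<and>
     (\<forall>x\<in>S. \<forall>y\<in>S. \<forall>t::real. 0 \<le> t \<and> t \<le> 1 \<longrightarrow>
        f ((1 - t) *\<^sub>R x + t *\<^sub>R y) \<le> (1 - t) * f x + t * f y - mu / 2 * t * (1 - t) * (norm (x - y))\<^sup>2)"

definition noise_filtration ::
  "'w measure \<Rightarrow> ('w \<Rightarrow> 'a::topological_space) \<Rightarrow> ('w \<Rightarrow> 'b::topological_space)
   \<Rightarrow> (nat \<Rightarrow> 'w \<Rightarrow> 'a) \<Rightarrow> (nat \<Rightarrow> 'w \<Rightarrow> 'b) \<Rightarrow> nat \<Rightarrow> 'w measure" where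
  "noise_filtration M x0 t0 w v k = sigma (space M)
     ({x0 -` A \<inter> space M | A. A \<in> sets borel} \<union> {t0 -` A \<inter> space M | A. A \<in> sets borel}
      \<union> (\<Union>l\<in>{..<k}. {w l -` A \<inter> space M | A. A \<in> sets borel} \<union> {v l -` A \<inter> space M | A. A \<in> sets borel}))"

end

theory Submission
  imports Defs
begin

text \<open>Let \<open>\<theta>\<^sub>s\<close> minimise \<open>g\<close> and \<open>x\<^sub>s\<close> minimise \<open>f(\<cdot>; \<theta>\<^sub>s)\<close>; both exist, are unique and are
  fixed points of the exact projected gradient steps. Comparing one noisy step with the exact step
  from the fixed point (the projection is nonexpansive) and using strong monotonicity and the
  Lipschitz bounds of the gradients, the Lyapunov function
  \<open>V\<^sub>k = \<parallel>x\<^sub>k - x\<^sub>s\<parallel>\<^sup>2 + \<parallel>\<theta>\<^sub>k - \<theta>\<^sub>s\<parallel>\<^sup>2\<close> satisfies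
  \<open>V\<^sub>k\<^sub>+\<^sub>1 \<le> (1 - c \<gamma>\<^sub>k + K \<gamma>\<^sub>k\<^sup>2) V\<^sub>k + \<xi>\<^sub>k + \<beta>\<^sub>k\<close>, where the step-size ratio
  \<open>\<gamma>\<^sub>\<theta> / \<gamma>\<^sub>x = L\<^sub>\<theta>\<^sup>2/(\<mu>\<^sub>x \<mu>\<^sub>\<theta>)\<close> makes the \<open>\<theta>\<close>-contraction absorb the coupling of the \<open>x\<close>-step.
  Here \<open>\<xi>\<^sub>k\<close> is a martingale difference with \<open>E \<xi>\<^sub>k\<^sup>2 = O(\<gamma>\<^sub>k\<^sup>2 E V\<^sub>k)\<close> and \<open>E \<beta>\<^sub>k = O(\<gamma>\<^sub>k\<^sup>2)\<close>.
  Taking expectations bounds \<open>E V\<^sub>k\<close> uniformly (after localising on \<open>V\<^sub>0 \<le> R\<close>), so both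
  \<open>\<Sum> \<xi>\<^sub>k\<close> (by Kolmogorov's maximal inequality) and \<open>\<Sum> \<beta>\<^sub>k\<close> converge almost surely, and a
  deterministic Robbins--Siegmund argument along each such path gives \<open>V\<^sub>k \<rightarrow> 0\<close>.\<close>

section \<open>Strong convexity and projected gradient steps\<close>

lemma has_derivative_difference_quotient_at_right:
  fixes h :: "'a::euclidean_space \<Rightarrow> real"
  assumes "(h has_derivative (\<lambda>v. G \<bullet> v)) (at x)"
  shows "((\<lambda>t. (h (x + t *\<^sub>R u) - h x) / t) \<longlongrightarrow> G \<bullet> u) (at_right 0)"
proof -
  have line: "((\<lambda>t::real. x + t *\<^sub>R u) has_derivative (\<lambda>s. s *\<^sub>R u)) (at 0)"
    by (auto intro!: derivative_eq_intros)
  have "((\<lambda>t. h (x + t *\<^sub>R u)) has_derivative (\<lambda>s. G \<bullet> (s *\<^sub>R u))) (at 0)"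
    using has_derivative_compose[OF line, of h "\<lambda>v. G \<bullet> v"] assms by (simp add: o_def)
  moreover have "(\<lambda>s. G \<bullet> (s *\<^sub>R u)) = (*) (G \<bullet> u)" by (auto simp: fun_eq_iff)
  ultimately have "((\<lambda>t. h (x + t *\<^sub>R u)) has_field_derivative (G \<bullet> u)) (at 0)"
    unfolding has_field_derivative_def by metis
  then have "((\<lambda>t. (h (x + t *\<^sub>R u) - h x) / t) \<longlongrightarrow> G \<bullet> u) (at 0)"
    by (simp add: has_field_derivative_iff)
  then show ?thesis by (rule tendsto_mono[rotated]) (simp add: at_le)
qed

lemma strongly_convex_on_gradient_ineq:
  fixes h :: "'a::euclidean_space \<Rightarrow> real"
  assumes sc: "strongly_convex_on S h mu"
    and d: "(h has_derivative (\<lambda>v. G \<bullet> v)) (at x)"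
    and xS: "x \<in> S" and yS: "y \<in> S"
  shows "h y \<ge> h x + G \<bullet> (y - x) + mu / 2 * (norm (y - x))\<^sup>2"
proof -
  let ?q = "\<lambda>t. (h (x + t *\<^sub>R (y - x)) - h x) / t"
  let ?r = "\<lambda>t. h y - h x - mu / 2 * (1 - t) * (norm (x - y))\<^sup>2"
  have lim_r: "(?r \<longlongrightarrow> h y - h x - mu / 2 * (1 - 0) * (norm (x - y))\<^sup>2) (at_right 0)"
    by (intro tendsto_intros)
  have ev: "eventually (\<lambda>t. ?q t \<le> ?r t) (at_right 0)"
    unfolding eventually_at_right_field
  proof (intro exI[of _ 1] conjI allI impI; (simp only: zero_less_one)?)
    fix t :: real assume t: "0 < t" "t < 1"
    have "h ((1 - t) *\<^sub>R x + t *\<^sub>R y) \<le> (1 - t) * h x + t * h y - mu / 2 * t * (1 - t) * (norm (x - y))\<^sup>2"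
      using sc xS yS t unfolding strongly_convex_on_def by auto
    moreover have "(1 - t) *\<^sub>R x + t *\<^sub>R y = x + t *\<^sub>R (y - x)" by (simp add: algebra_simps)
    ultimately have "h (x + t *\<^sub>R (y - x)) - h x \<le> t * ?r t"
      by (simp add: algebra_simps)
    then show "?q t \<le> ?r t"
      using t by (simp add: divide_le_eq mult.commute)
  qed
  have "G \<bullet> (y - x) \<le> h y - h x - mu / 2 * (1 - 0) * (norm (x - y))\<^sup>2"
    by (rule tendsto_le[OF _ lim_r has_derivative_difference_quotient_at_right[OF d] ev]) simp
  then show ?thesis by (simp add: norm_minus_commute)
qed

lemma strongly_convex_on_gradient_monotone:
  fixes h :: "'a::euclidean_space \<Rightarrow> real"
  assumes sc: "strongly_convex_on S h mu"
    and dx: "(h has_derivative (\<lambda>v. G x \<bullet> v)) (at x)"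
    and dy: "(h has_derivative (\<lambda>v. G y \<bullet> v)) (at y)"
    and xS: "x \<in> S" and yS: "y \<in> S"
  shows "(G x - G y) \<bullet> (x - y) \<ge> mu * (norm (x - y))\<^sup>2"
proof -
  have "h y \<ge> h x + G x \<bullet> (y - x) + mu / 2 * (norm (y - x))\<^sup>2"
    by (rule strongly_convex_on_gradient_ineq[OF sc dx xS yS])
  moreover have "h x \<ge> h y + G y \<bullet> (x - y) + mu / 2 * (norm (x - y))\<^sup>2"
    by (rule strongly_convex_on_gradient_ineq[OF sc dy yS xS])
  moreover have "G x \<bullet> (y - x) = - (G x \<bullet> (x - y))" by (simp add: inner_diff_right)
  ultimately show ?thesis by (simp add: norm_minus_commute inner_diff_left)
qed

lemma minimizer_variational_inequality:
  fixes h :: "'a::euclidean_space \<Rightarrow> real"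
  assumes cS: "convex S" and d: "(h has_derivative (\<lambda>v. G \<bullet> v)) (at x)"
    and xS: "x \<in> S" and yS: "y \<in> S" and min: "\<forall>z\<in>S. h x \<le> h z"
  shows "G \<bullet> (y - x) \<ge> 0"
proof -
  have ev: "eventually (\<lambda>t. 0 \<le> (h (x + t *\<^sub>R (y - x)) - h x) / t) (at_right 0)"
    unfolding eventually_at_right_field
  proof (intro exI[of _ 1] conjI allI impI; (simp only: zero_less_one)?)
    fix t :: real assume t: "0 < t" "t < 1"
    have "(1 - t) *\<^sub>R x + t *\<^sub>R y \<in> S" using cS xS yS t by (simp add: convex_def)
    moreover have "(1 - t) *\<^sub>R x + t *\<^sub>R y = x + t *\<^sub>R (y - x)" by (simp add: algebra_simps)
    ultimately have "h x \<le> h (x + t *\<^sub>R (y - x))" using min by metis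
    then show "0 \<le> (h (x + t *\<^sub>R (y - x)) - h x) / t" using t by simp
  qed
  show ?thesis
    by (rule tendsto_le[OF _ has_derivative_difference_quotient_at_right[OF d] tendsto_const ev]) simp
qed

text \<open>The minimiser is found in the ball of radius \<open>2 \<parallel>G x\<^sub>0\<parallel> / mu\<close> around any
  feasible \<open>x\<^sub>0\<close>, outside of which the quadratic growth beats the linear term.\<close>
lemma strongly_convex_on_minimizer:
  fixes h :: "'a::euclidean_space \<Rightarrow> real"
  assumes cl: "closed S" and cS: "convex S" and ne: "S \<noteq> {}"
    and sc: "strongly_convex_on S h mu" and mu: "mu > 0"
    and d: "\<And>x. x \<in> S \<Longrightarrow> (h has_derivative (\<lambda>v. G x \<bullet> v)) (at x)"
  shows "\<exists>xs\<in>S. (\<forall>y\<in>S. h xs \<le> h y) \<and> (\<forall>y\<in>S. (\<forall>z\<in>S. h y \<le> h z) \<longrightarrow> y = xs)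
     \<and> (\<forall>y\<in>S. G xs \<bullet> (y - xs) \<ge> 0)"
proof -
  obtain x0 where x0: "x0 \<in> S" using ne by auto
  define K where "K = S \<inter> cball x0 (2 * norm (G x0) / mu)"
  have x0K: "x0 \<in> K" unfolding K_def using x0 mu by auto
  have "compact K" unfolding K_def using cl by (intro closed_Int_compact) auto
  moreover have "continuous_on K h"
    by (rule continuous_at_imp_continuous_on)
       (auto simp: K_def intro!: has_derivative_continuous[OF d])
  ultimately obtain xs where xs: "xs \<in> K" "\<forall>y\<in>K. h xs \<le> h y"
    using continuous_attains_inf x0K by blast
  have min: "\<forall>y\<in>S. h xs \<le> h y"
  proof
    fix y assume yS: "y \<in> S"
    show "h xs \<le> h y"
    proof (cases "y \<in> K")
      case False
      then have far: "norm (G x0) \<le> mu / 2 * norm (y - x0)"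
        using yS mu by (auto simp: K_def dist_norm norm_minus_commute field_simps)
      have "h y \<ge> h x0 + G x0 \<bullet> (y - x0) + mu / 2 * (norm (y - x0))\<^sup>2"
        by (rule strongly_convex_on_gradient_ineq[OF sc d[OF x0] x0 yS])
      moreover have "G x0 \<bullet> (y - x0) \<ge> - (norm (G x0) * norm (y - x0))"
        using Cauchy_Schwarz_ineq2[of "G x0" "y - x0"] by (simp add: abs_le_iff)
      moreover have "norm (G x0) * norm (y - x0) \<le> mu / 2 * (norm (y - x0))\<^sup>2"
        using mult_right_mono[OF far norm_ge_zero] by (simp add: power2_eq_square mult.assoc)
      ultimately have "h y \<ge> h x0" by linarith
      then show ?thesis using xs x0K by force
    qed (use xs in auto)
  qed
  have xsS: "xs \<in> S" using xs by (auto simp: K_def)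
  have VI: "\<forall>y\<in>S. G xs \<bullet> (y - xs) \<ge> 0"
    using minimizer_variational_inequality[OF cS d[OF xsS] xsS _ min] by blast
  have "y = xs" if yS: "y \<in> S" and ymin: "\<forall>z\<in>S. h y \<le> h z" for y
  proof -
    have "h y \<ge> h xs + G xs \<bullet> (y - xs) + mu / 2 * (norm (y - xs))\<^sup>2"
      by (rule strongly_convex_on_gradient_ineq[OF sc d[OF xsS] xsS yS])
    then have "mu / 2 * (norm (y - xs))\<^sup>2 \<le> 0" using ymin xsS VI yS by force
    then show "y = xs" using mu by (simp add: mult_le_0_iff)
  qed
  then show ?thesis using xsS min VI by blast
qed

lemma closest_point_gradient_step_fixed:
  fixes xs :: "'a::euclidean_space"
  assumes cS: "convex S" and cl: "closed S" and xsS: "xs \<in> S"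
    and VI: "\<forall>y\<in>S. G \<bullet> (y - xs) \<ge> 0" and \<gamma>: "\<gamma> \<ge> 0"
  shows "closest_point S (xs - \<gamma> *\<^sub>R G) = xs"
proof -
  have "dist (xs - \<gamma> *\<^sub>R G) xs \<le> dist (xs - \<gamma> *\<^sub>R G) z" if zS: "z \<in> S" for z
  proof -
    have "G \<bullet> (xs - z) \<le> 0" using VI zS by (simp add: inner_diff_right)
    then have "- 2 * \<gamma> * (G \<bullet> (xs - z)) \<ge> 0" using \<gamma> by (simp add: mult_nonneg_nonpos)
    moreover have "(xs - \<gamma> *\<^sub>R G - z) \<bullet> (xs - \<gamma> *\<^sub>R G - z)
        = (xs - z) \<bullet> (xs - z) - 2 * \<gamma> * (G \<bullet> (xs - z)) + (\<gamma> *\<^sub>R G) \<bullet> (\<gamma> *\<^sub>R G)"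
      by (simp add: inner_diff_left inner_diff_right inner_commute algebra_simps)
    ultimately have "(\<gamma> *\<^sub>R G) \<bullet> (\<gamma> *\<^sub>R G) \<le> (xs - \<gamma> *\<^sub>R G - z) \<bullet> (xs - \<gamma> *\<^sub>R G - z)"
      using inner_ge_zero[of "xs - z"] by linarith
    then show ?thesis unfolding norm_le[symmetric] by (simp add: dist_norm)
  qed
  then show ?thesis using closest_point_unique[OF cS cl xsS] by metis
qed

lemma norm_diff_scaleR_square:
  fixes a w :: "'a::real_inner"
  shows "(norm (a - g *\<^sub>R w))\<^sup>2 = (norm a)\<^sup>2 - 2 * g * (a \<bullet> w) + g\<^sup>2 * (norm w)\<^sup>2"
  unfolding power2_norm_eq_inner
  by (simp add: inner_diff_left inner_diff_right inner_commute power2_eq_square algebra_simps)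

text \<open>The projection is nonexpansive, so a noisy step is compared with the exact step from the
  fixed point \<open>z\<close>.\<close>
lemma closest_point_noisy_step_dist_square_le:
  fixes y z :: "'a::euclidean_space"
  assumes S: "convex S" "closed S" "S \<noteq> {}"
    and fixed: "closest_point S (z - \<gamma> *\<^sub>R G') = z"
  shows "(norm (closest_point S (y - \<gamma> *\<^sub>R (G + W)) - z))\<^sup>2
    \<le> (norm ((y - z) - \<gamma> *\<^sub>R (G - G')))\<^sup>2 - 2 * \<gamma> * (((y - z) - \<gamma> *\<^sub>R (G - G')) \<bullet> W) + \<gamma>\<^sup>2 * (norm W)\<^sup>2"
proof -
  have "dist (closest_point S (y - \<gamma> *\<^sub>R (G + W))) (closest_point S (z - \<gamma> *\<^sub>R G'))
      \<le> dist (y - \<gamma> *\<^sub>R (G + W)) (z - \<gamma> *\<^sub>R G')"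
    by (rule closest_point_lipschitz[OF S])
  moreover have "(y - \<gamma> *\<^sub>R (G + W)) - (z - \<gamma> *\<^sub>R G') = ((y - z) - \<gamma> *\<^sub>R (G - G')) - \<gamma> *\<^sub>R W"
    by (simp add: algebra_simps)
  ultimately have "norm (closest_point S (y - \<gamma> *\<^sub>R (G + W)) - z) \<le> norm (((y - z) - \<gamma> *\<^sub>R (G - G')) - \<gamma> *\<^sub>R W)"
    using fixed by (simp add: dist_norm)
  from power_mono[OF this norm_ge_zero, of 2] show ?thesis by (simp only: norm_diff_scaleR_square)
qed

lemma strongly_monotone_step_norm_square_le:
  fixes d h :: "'a::real_inner"
  assumes mono: "d \<bullet> h \<ge> mu * (norm d)\<^sup>2" and lip: "norm h \<le> C * norm d" and s: "s \<ge> 0"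
  shows "(norm (d - s *\<^sub>R h))\<^sup>2 \<le> (1 - 2 * s * mu + s\<^sup>2 * C\<^sup>2) * (norm d)\<^sup>2"
proof -
  have "- 2 * s * (d \<bullet> h) \<le> - 2 * s * (mu * (norm d)\<^sup>2)" using mono s by (simp add: mult_left_mono)
  moreover have "s\<^sup>2 * (norm h)\<^sup>2 \<le> s\<^sup>2 * (C * norm d)\<^sup>2"
    using lip by (intro mult_left_mono power_mono) auto
  ultimately show ?thesis
    by (simp add: norm_diff_scaleR_square power_mult_distrib algebra_simps)
qed

text \<open>The perturbation \<open>g\<^sub>2\<close> is absorbed by Young's inequality
  \<open>2 \<bar>e \<bullet> g\<^sub>2\<bar> \<le> mu \<parallel>e\<parallel>\<^sup>2 + (B nd)\<^sup>2 / mu\<close>, which costs half of the contraction.\<close>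
lemma perturbed_monotone_step_norm_square_le:
  fixes e g1 g2 :: "'a::real_inner"
  assumes mono: "e \<bullet> g1 \<ge> mu * (norm e)\<^sup>2" and lip1: "norm g1 \<le> A * norm e"
    and lip2: "norm g2 \<le> B * nd" and \<gamma>: "\<gamma> \<ge> 0" and mu: "mu > 0" and nd: "nd \<ge> 0"
  shows "(norm (e - \<gamma> *\<^sub>R (g1 + g2)))\<^sup>2 \<le> (1 - \<gamma> * mu + 2 * \<gamma>\<^sup>2 * A\<^sup>2) * (norm e)\<^sup>2
          + (\<gamma> * B\<^sup>2 / mu + 2 * \<gamma>\<^sup>2 * B\<^sup>2) * nd\<^sup>2"
proof -
  have t1: "- 2 * \<gamma> * (e \<bullet> g1) \<le> - 2 * \<gamma> * (mu * (norm e)\<^sup>2)"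
    using mono \<gamma> by (simp add: mult_left_mono)
  have "- (e \<bullet> g2) \<le> norm e * (B * nd)"
    using Cauchy_Schwarz_ineq2[of e g2] mult_left_mono[OF lip2 norm_ge_zero, of e] by (simp add: abs_le_iff)
  also have "\<dots> \<le> (mu * (norm e)\<^sup>2 + (B * nd)\<^sup>2 / mu) / 2"
  proof -
    have "0 \<le> (mu * norm e - B * nd)\<^sup>2 / mu" using mu by simp
    also have "\<dots> = mu * (norm e)\<^sup>2 + (B * nd)\<^sup>2 / mu - 2 * (norm e * (B * nd))"
      using mu by (simp add: power2_diff field_simps power2_eq_square)
    finally show ?thesis by simp
  qed
  finally have "2 * \<gamma> * (- (e \<bullet> g2)) \<le> 2 * \<gamma> * ((mu * (norm e)\<^sup>2 + (B * nd)\<^sup>2 / mu) / 2)"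
    by (rule mult_left_mono) (use \<gamma> in auto)
  then have t2: "- 2 * \<gamma> * (e \<bullet> g2) \<le> \<gamma> * (mu * (norm e)\<^sup>2 + (B * nd)\<^sup>2 / mu)"
    by simp
  have "norm (g1 + g2) \<le> A * norm e + B * nd" using norm_triangle_ineq[of g1 g2] lip1 lip2 by simp
  then have "(norm (g1 + g2))\<^sup>2 \<le> (A * norm e + B * nd)\<^sup>2" by (simp add: power_mono)
  also have "\<dots> \<le> 2 * (A * norm e)\<^sup>2 + 2 * (B * nd)\<^sup>2"
    using zero_le_power2[of "A * norm e - B * nd"] by (simp add: power2_diff power2_sum)
  finally have t3: "\<gamma>\<^sup>2 * (norm (g1 + g2))\<^sup>2 \<le> \<gamma>\<^sup>2 * (2 * (A * norm e)\<^sup>2 + 2 * (B * nd)\<^sup>2)"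
    by (simp add: mult_left_mono)
  have "(norm (e - \<gamma> *\<^sub>R (g1 + g2)))\<^sup>2 = (norm e)\<^sup>2 - 2 * \<gamma> * (e \<bullet> g1) - 2 * \<gamma> * (e \<bullet> g2) + \<gamma>\<^sup>2 * (norm (g1 + g2))\<^sup>2"
    by (subst norm_diff_scaleR_square) (simp add: inner_add_right algebra_simps)
  also have "\<dots> \<le> (norm e)\<^sup>2 - 2 * \<gamma> * (mu * (norm e)\<^sup>2)
      + \<gamma> * (mu * (norm e)\<^sup>2 + (B * nd)\<^sup>2 / mu) + \<gamma>\<^sup>2 * (2 * (A * norm e)\<^sup>2 + 2 * (B * nd)\<^sup>2)"
    using t1 t2 t3 by linarith
  also have "\<dots> = (1 - \<gamma> * mu + 2 * \<gamma>\<^sup>2 * A\<^sup>2) * (norm e)\<^sup>2 + (\<gamma> * B\<^sup>2 / mu + 2 * \<gamma>\<^sup>2 * B\<^sup>2) * nd\<^sup>2"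
    by (simp add: power_mult_distrib algebra_simps add_divide_distrib)
  finally show ?thesis .
qed

lemma lipschitz_step_norm_square_le:
  fixes e g1 g2 :: "'a::real_normed_vector"
  assumes lip1: "norm g1 \<le> A * norm e" and lip2: "norm g2 \<le> B * nd" and \<gamma>: "\<gamma> \<ge> 0" and nd: "nd \<ge> 0"
    and \<Gamma>: "\<gamma>\<^sup>2 \<le> \<Gamma>"
  shows "(norm (e - \<gamma> *\<^sub>R (g1 + g2)))\<^sup>2 \<le> (3 + 3 * \<Gamma> * (A\<^sup>2 + B\<^sup>2)) * ((norm e)\<^sup>2 + nd\<^sup>2)"
proof -
  have "norm (e - \<gamma> *\<^sub>R (g1 + g2)) \<le> norm e + \<gamma> * norm (g1 + g2)"
    using norm_triangle_ineq4[of e "\<gamma> *\<^sub>R (g1 + g2)"] \<gamma> by simp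
  also have "\<dots> \<le> norm e + \<gamma> * norm g1 + \<gamma> * norm g2"
    using mult_left_mono[OF norm_triangle_ineq[of g1 g2] \<gamma>] by (simp add: algebra_simps)
  also have "\<dots> \<le> norm e + \<gamma> * (A * norm e) + \<gamma> * (B * nd)"
    using lip1 lip2 \<gamma> by (intro add_mono mult_left_mono) auto
  finally have "(norm (e - \<gamma> *\<^sub>R (g1 + g2)))\<^sup>2 \<le> (norm e + \<gamma> * (A * norm e) + \<gamma> * (B * nd))\<^sup>2"
    by (rule power_mono[OF _ norm_ge_zero])
  also have "\<dots> \<le> 3 * ((norm e)\<^sup>2 + \<gamma>\<^sup>2 * (A\<^sup>2 * (norm e)\<^sup>2) + \<gamma>\<^sup>2 * (B\<^sup>2 * nd\<^sup>2))"
    using zero_le_power2[of "norm e - \<gamma> * (A * norm e)"] zero_le_power2[of "\<gamma> * (A * norm e) - \<gamma> * (B * nd)"]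
      zero_le_power2[of "norm e - \<gamma> * (B * nd)"]
    by (simp add: power2_eq_square algebra_simps)
  also have "\<dots> \<le> 3 * ((norm e)\<^sup>2 + \<Gamma> * (A\<^sup>2 * (norm e)\<^sup>2) + \<Gamma> * (B\<^sup>2 * nd\<^sup>2))"
    using \<Gamma> by (intro mult_left_mono add_mono mult_right_mono) auto
  also have "\<dots> \<le> (3 + 3 * \<Gamma> * (A\<^sup>2 + B\<^sup>2)) * ((norm e)\<^sup>2 + nd\<^sup>2)"
  proof -
    have "0 \<le> \<Gamma>" using \<Gamma> by (meson order_trans zero_le_power2)
    then have "0 \<le> \<Gamma> * (B\<^sup>2 * (norm e)\<^sup>2) + \<Gamma> * (A\<^sup>2 * nd\<^sup>2)" by simp
    then show ?thesis by (simp add: algebra_simps)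
  qed
  finally show ?thesis .
qed

lemma continuous_on_Times_if_separately_lipschitz:
  fixes G :: "'a::euclidean_space \<Rightarrow> 'b::euclidean_space \<Rightarrow> 'c::real_normed_vector"
  assumes L1: "\<And>t y z. t \<in> T \<Longrightarrow> y \<in> Y \<Longrightarrow> z \<in> Y \<Longrightarrow> norm (G y t - G z t) \<le> A * norm (y - z)"
    and L2: "\<And>y t s. y \<in> Y \<Longrightarrow> t \<in> T \<Longrightarrow> s \<in> T \<Longrightarrow> norm (G y t - G y s) \<le> B * norm (t - s)"
  shows "continuous_on (Y \<times> T) (\<lambda>p. G (fst p) (snd p))"
proof (rule lipschitz_on_continuous_on)
  show "(\<bar>A\<bar> + \<bar>B\<bar>)-lipschitz_on (Y \<times> T) (\<lambda>p. G (fst p) (snd p))"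
  proof (rule lipschitz_onI)
    fix p p' assume p: "p \<in> Y \<times> T" and p': "p' \<in> Y \<times> T"
    have "dist (G (fst p) (snd p)) (G (fst p') (snd p'))
        \<le> norm (G (fst p) (snd p) - G (fst p') (snd p)) + norm (G (fst p') (snd p) - G (fst p') (snd p'))"
      using norm_triangle_ineq[of "G (fst p) (snd p) - G (fst p') (snd p)" "G (fst p') (snd p) - G (fst p') (snd p')"]
      by (simp add: dist_norm)
    also have "\<dots> \<le> A * norm (fst p - fst p') + B * norm (snd p - snd p')"
      using L1[of "snd p" "fst p" "fst p'"] L2[of "fst p'" "snd p" "snd p'"] p p'
      by (intro add_mono) (auto simp: mem_Times_iff)
    also have "\<dots> \<le> \<bar>A\<bar> * dist p p' + \<bar>B\<bar> * dist p p'"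
      using dist_fst_le[of p p'] dist_snd_le[of p p']
      by (intro add_mono; simp add: dist_norm; meson abs_ge_self abs_ge_zero mult_mono norm_ge_zero order_trans)
    finally show "dist (G (fst p) (snd p)) (G (fst p') (snd p')) \<le> (\<bar>A\<bar> + \<bar>B\<bar>) * dist p p'"
      by (simp add: algebra_simps)
  qed simp
qed

section \<open>Deterministic perturbed recursions\<close>

lemma suminf_tail_tendsto_zero:
  fixes f :: "nat \<Rightarrow> real"
  assumes "summable f"
  shows "(\<lambda>n. \<Sum>j. f (j + n)) \<longlonglongrightarrow> 0"
proof -
  have "(\<lambda>k. suminf f - (\<Sum>i<k. f i)) \<longlonglongrightarrow> suminf f - suminf f"
    by (intro tendsto_intros summable_LIMSEQ[OF assms])
  moreover have "(\<lambda>n. \<Sum>j. f (j + n)) = (\<lambda>k. suminf f - (\<Sum>i<k. f i))"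
    using suminf_minus_initial_segment[OF assms] by auto
  ultimately show ?thesis by simp
qed

lemma limit_eq_zero_if_weighted_summable:
  fixes a V :: "nat \<Rightarrow> real"
  assumes a0: "\<And>k. a k \<ge> 0" and not_sum: "\<not> summable a"
    and sum_aV: "summable (\<lambda>k. a k * V k)" and lim: "V \<longlonglongrightarrow> L" and L0: "L \<ge> 0"
  shows "L = 0"
proof (rule ccontr)
  assume "L \<noteq> 0"
  then have half: "L / 2 < L" using L0 by simp
  have "eventually (\<lambda>k. L / 2 < V k) sequentially" by (rule order_tendstoD(1)[OF lim half])
  then obtain N where N: "\<And>k. k \<ge> N \<Longrightarrow> L / 2 < V k" by (auto simp: eventually_sequentially)
  have "norm (a k) \<le> (2 / L) * (a k * V k)" if "k \<ge> N" for k
  proof -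
    have "a k * L \<le> a k * (2 * V k)" using N[OF that] a0[of k] by (intro mult_left_mono) auto
    then show ?thesis using a0[of k] L0 \<open>L \<noteq> 0\<close> by (simp add: field_simps)
  qed
  then have "summable a" by (rule summable_comparison_test'[OF summable_mult[OF sum_aV]])
  with not_sum show False by simp
qed

text \<open>Deterministic Robbins--Siegmund lemma: adding the tail sums of the perturbation
  turns \<open>V\<close> into a decreasing sequence.\<close>
lemma nonneg_recursion_tendsto_zero:
  fixes V a s :: "nat \<Rightarrow> real"
  assumes V0: "\<And>k. V k \<ge> 0" and a0: "\<And>k. a k \<ge> 0" and not_sum: "\<not> summable a"
    and sum_s: "summable s"
    and rec: "\<And>k. V (Suc k) \<le> V k - a k * V k + s k"
  shows "V \<longlonglongrightarrow> 0"
proof -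
  define T where "T k = (\<Sum>j. s (j + k))" for k
  have T_Suc: "T (Suc k) = T k - s k" for k
    using suminf_split_head[of "\<lambda>j. s (j + k)"] sum_s by (simp add: T_def)
  have T_lim: "T \<longlonglongrightarrow> 0" unfolding T_def by (rule suminf_tail_tendsto_zero[OF sum_s])
  then obtain B where B: "\<And>k. norm (T k) \<le> B"
    using convergent_imp_Bseq convergent_def BseqE by metis
  define W where "W k = V k + T k" for k
  have W_step: "W (Suc k) + a k * V k \<le> W k" for k
    using rec[of k] T_Suc[of k] by (simp add: W_def)
  have W_lower: "- B \<le> W k" for k
    using B[of k] V0[of k] by (simp add: W_def abs_le_iff)
  have "decseq W"
    by (rule decseq_SucI) (use W_step mult_nonneg_nonneg[OF a0 V0] in \<open>smt (verit)\<close>)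
  then obtain L where "W \<longlonglongrightarrow> L" using decseq_convergent[of W "-B"] W_lower by blast
  then have "(\<lambda>k. W k - T k) \<longlonglongrightarrow> L - 0" by (intro tendsto_intros T_lim)
  then have V_lim: "V \<longlonglongrightarrow> L" by (simp add: W_def)
  have partial: "(\<Sum>k<n. a k * V k) \<le> W 0 - W n" for n
  proof (induction n)
    case (Suc n) then show ?case using W_step[of n] by simp
  qed simp
  have "summable (\<lambda>k. a k * V k)"
  proof (rule summableI_nonneg_bounded[where x = "W 0 + B"])
    show "0 \<le> a n * V n" for n using mult_nonneg_nonneg[OF a0 V0] .
    show "(\<Sum>k<n. a k * V k) \<le> W 0 + B" for n using partial[of n] W_lower[of n] by linarith
  qed
  moreover have "L \<ge> 0" by (rule LIMSEQ_le_const[OF V_lim]) (use V0 in auto)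
  ultimately have "L = 0" using limit_eq_zero_if_weighted_summable[OF a0 not_sum _ V_lim] by blast
  with V_lim show ?thesis by simp
qed

text \<open>Once \<open>\<gamma> k < c / (2 (\<bar>K\<bar> + 1))\<close>, the second-order term is absorbed by half of the
  contraction.\<close>
lemma perturbed_recursion_tendsto_zero:
  fixes V \<gamma> \<xi> \<beta> :: "nat \<Rightarrow> real"
  assumes V0: "\<And>k. V k \<ge> 0" and \<gamma>0: "\<And>k. \<gamma> k > 0" and c: "c > 0"
    and not_sum: "\<not> summable \<gamma>" and sum_sq: "summable (\<lambda>k. (\<gamma> k)\<^sup>2)"
    and sum_\<xi>: "summable \<xi>" and sum_\<beta>: "summable \<beta>"
    and rec: "\<And>k. V (Suc k) \<le> V k - c * \<gamma> k * V k + K * (\<gamma> k)\<^sup>2 * V k + \<xi> k + \<beta> k"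
  shows "V \<longlonglongrightarrow> 0"
proof -
  have "(\<lambda>k. sqrt ((\<gamma> k)\<^sup>2)) \<longlonglongrightarrow> sqrt 0"
    by (rule tendsto_real_sqrt[OF summable_LIMSEQ_zero[OF sum_sq]])
  then have "\<gamma> \<longlonglongrightarrow> 0" using \<gamma>0 by (simp add: less_imp_le)
  moreover have "c / (2 * (\<bar>K\<bar> + 1)) > 0" using c by simp
  ultimately obtain N where N: "\<And>k. k \<ge> N \<Longrightarrow> \<gamma> k < c / (2 * (\<bar>K\<bar> + 1))"
    using order_tendstoD(2) by (metis eventually_sequentially)
  have absorb: "K * (\<gamma> k)\<^sup>2 * V k \<le> c / 2 * \<gamma> k * V k" if "k \<ge> N" for k
  proof -
    have "\<gamma> k * (2 * \<bar>K\<bar>) \<le> \<gamma> k * (2 * (\<bar>K\<bar> + 1))" using \<gamma>0[of k] by (intro mult_left_mono) auto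
    also have "\<dots> < c" using N[OF that] by (simp add: field_simps)
    finally have "\<bar>K\<bar> * \<gamma> k \<le> c / 2" by (simp add: field_simps mult_ac)
    then have "\<bar>K\<bar> * \<gamma> k * \<gamma> k \<le> c / 2 * \<gamma> k" using \<gamma>0[of k] by (intro mult_right_mono) auto
    moreover have "K * (\<gamma> k)\<^sup>2 \<le> \<bar>K\<bar> * \<gamma> k * \<gamma> k"
      by (simp add: power2_eq_square mult.assoc mult_right_mono)
    ultimately show ?thesis using V0[of k] by (intro mult_right_mono) auto
  qed
  have "(\<lambda>k. V (k + N)) \<longlonglongrightarrow> 0"
  proof (rule nonneg_recursion_tendsto_zero
      [where a = "\<lambda>k. c / 2 * \<gamma> (k + N)" and s = "\<lambda>k. \<xi> (k + N) + \<beta> (k + N)"])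
    show "0 \<le> c / 2 * \<gamma> (k + N)" for k using c \<gamma>0 by (simp add: less_imp_le)
    show "\<not> summable (\<lambda>k. c / 2 * \<gamma> (k + N))"
      using not_sum summable_iff_shift[of \<gamma> N] summable_cmult_iff[of "c / 2"] c by simp
    show "summable (\<lambda>k. \<xi> (k + N) + \<beta> (k + N))"
      using summable_add[OF sum_\<xi> sum_\<beta>] by (simp add: summable_iff_shift[of "\<lambda>k. \<xi> k + \<beta> k"])
    show "V (Suc k + N) \<le> V (k + N) - c / 2 * \<gamma> (k + N) * V (k + N) + (\<xi> (k + N) + \<beta> (k + N))" for k
      using rec[of "k + N"] absorb[of "k + N"] by simp
  qed (use V0 in auto)
  then show ?thesis by (rule LIMSEQ_offset)
qed

lemma discrete_gronwall:
  fixes u a b :: "nat \<Rightarrow> real"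
  assumes u0: "u 0 \<ge> 0" and a0: "\<And>k. a k \<ge> 0" and b0: "\<And>k. b k \<ge> 0"
    and rec: "\<And>k. u (Suc k) \<le> (1 + a k) * u k + b k"
  shows "u k \<le> (u 0 + (\<Sum>j<k. b j)) * exp (\<Sum>j<k. a j)"
proof (induction k)
  case (Suc k)
  let ?P = "(u 0 + (\<Sum>j<k. b j)) * exp (\<Sum>j<k. a j)"
  have P0: "0 \<le> ?P" using u0 b0 by (simp add: sum_nonneg)
  have "(1 + a k) * u k \<le> (1 + a k) * ?P" using Suc a0[of k] by (intro mult_left_mono) auto
  then have "u (Suc k) \<le> (1 + a k) * ?P + b k" using rec[of k] by simp
  also have "\<dots> \<le> exp (a k) * ?P + b k * exp (\<Sum>j<Suc k. a j)"
  proof (rule add_mono)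
    show "(1 + a k) * ?P \<le> exp (a k) * ?P"
      using mult_right_mono[OF exp_ge_add_one_self[of "a k"] P0] by (simp add: add.commute)
    have "1 \<le> exp (\<Sum>j<Suc k. a j)" using a0 by (simp add: sum_nonneg)
    then show "b k \<le> b k * exp (\<Sum>j<Suc k. a j)" using mult_left_mono[OF _ b0[of k]] by fastforce
  qed
  also have "\<dots> = (u 0 + (\<Sum>j<Suc k. b j)) * exp (\<Sum>j<Suc k. a j)"
    by (simp add: exp_add algebra_simps)
  finally show ?case .
qed simp

section \<open>Square-integrable martingale differences\<close>

lemma sigma_finite_subalgebra_space: "sigma_finite_subalgebra M F \<Longrightarrow> space F = space M"
  by (simp add: sigma_finite_subalgebra_def subalgebra_def)

lemma sigma_finite_subalgebra_borel_measurable: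
  "sigma_finite_subalgebra M F \<Longrightarrow> f \<in> borel_measurable F \<Longrightarrow> f \<in> borel_measurable M"
  using measurable_from_subalg sigma_finite_subalgebra_def by blast

lemma filtration_borel_measurable_mono:
  assumes sub: "\<And>k. sigma_finite_subalgebra M (F k)"
    and mono: "\<And>k. sets (F k) \<subseteq> sets (F (Suc k))"
    and "j \<le> k" and f: "f \<in> borel_measurable (F j)"
  shows "f \<in> borel_measurable (F k)"
proof -
  have "sets (F j) \<subseteq> sets (F k)" using lift_Suc_mono_le[of "\<lambda>k. sets (F k)", OF mono \<open>j \<le> k\<close>] .
  then have "subalgebra (F k) (F j)"
    unfolding subalgebra_def using sigma_finite_subalgebra_space[OF sub] by simp
  then show ?thesis using measurable_from_subalg f by blast
qed

lemma integrable_mult_if_square_integrable: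
  fixes f g :: "'w \<Rightarrow> real"
  assumes "integrable M (\<lambda>x. (f x)\<^sup>2)" "integrable M (\<lambda>x. (g x)\<^sup>2)"
    and "f \<in> borel_measurable M" "g \<in> borel_measurable M"
  shows "integrable M (\<lambda>x. f x * g x)"
proof (rule Bochner_Integration.integrable_bound[where f = "\<lambda>x. (f x)\<^sup>2 + (g x)\<^sup>2"])
  show "integrable M (\<lambda>x. (f x)\<^sup>2 + (g x)\<^sup>2)" using assms by auto
  show "(\<lambda>x. f x * g x) \<in> borel_measurable M" using assms by (intro borel_measurable_times)
  have two_ab: "2 * (\<bar>f x\<bar> * \<bar>g x\<bar>) \<le> (f x)\<^sup>2 + (g x)\<^sup>2" for x
    using zero_le_power2[of "\<bar>f x\<bar> - \<bar>g x\<bar>"] by (simp add: power2_eq_square algebra_simps)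
  have "\<bar>f x * g x\<bar> \<le> (f x)\<^sup>2 + (g x)\<^sup>2" for x
    unfolding abs_mult using two_ab[of x] mult_nonneg_nonneg[OF abs_ge_zero abs_ge_zero, of "f x" "g x"]
    by linarith
  then show "AE x in M. norm (f x * g x) \<le> norm ((f x)\<^sup>2 + (g x)\<^sup>2)" by simp
qed

lemma integrable_nonneg_dominated:
  fixes f H :: "'w \<Rightarrow> real"
  assumes H: "integrable M H" and f: "f \<in> borel_measurable M"
    and f0: "\<And>\<omega>. \<omega> \<in> space M \<Longrightarrow> 0 \<le> f \<omega>" and fH: "\<And>\<omega>. \<omega> \<in> space M \<Longrightarrow> f \<omega> \<le> H \<omega>"
  shows "integrable M f" "(\<integral>\<omega>. f \<omega> \<partial>M) \<le> (\<integral>\<omega>. H \<omega> \<partial>M)"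
proof -
  show i: "integrable M f"
    by (rule Bochner_Integration.integrable_bound[OF H f]) (use f0 fH in \<open>fastforce intro!: AE_I2\<close>)
  show "(\<integral>\<omega>. f \<omega> \<partial>M) \<le> (\<integral>\<omega>. H \<omega> \<partial>M)" by (rule integral_mono[OF i H fH])
qed

lemma integral_mult_eq_zero_if_cond_exp_zero:
  fixes \<zeta> Z :: "'w \<Rightarrow> real"
  assumes sub: "sigma_finite_subalgebra M F"
    and Z: "Z \<in> borel_measurable F" and Z_sq: "integrable M (\<lambda>x. (Z x)\<^sup>2)"
    and \<zeta>: "\<zeta> \<in> borel_measurable M" and \<zeta>_sq: "integrable M (\<lambda>x. (\<zeta> x)\<^sup>2)"
    and ce: "AE x in M. real_cond_exp M F \<zeta> x = 0"
  shows "integrable M (\<lambda>x. Z x * \<zeta> x)" "(\<integral>x. Z x * \<zeta> x \<partial>M) = 0"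
proof -
  have ZM: "Z \<in> borel_measurable M" by (rule sigma_finite_subalgebra_borel_measurable[OF sub Z])
  show int: "integrable M (\<lambda>x. Z x * \<zeta> x)"
    by (rule integrable_mult_if_square_integrable[OF Z_sq \<zeta>_sq ZM \<zeta>])
  have "(\<integral>x. Z x * \<zeta> x \<partial>M) = (\<integral>x. Z x * real_cond_exp M F \<zeta> x \<partial>M)"
    using sigma_finite_subalgebra.real_cond_exp_intg(2)[OF sub int Z \<zeta>] by simp
  also have "\<dots> = (\<integral>x. 0 \<partial>M)"
    by (rule integral_cong_AE) (use ce ZM sub in auto)
  finally show "(\<integral>x. Z x * \<zeta> x \<partial>M) = 0" by simp
qed

lemma integral_mult_norm_square_le_cond_bound:
  fixes W :: "'w \<Rightarrow> 'a::euclidean_space" and h :: "'w \<Rightarrow> real"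
  assumes sub: "sigma_finite_subalgebra M F" and W: "W \<in> borel_measurable M"
    and cv: "AE \<omega> in M. nn_cond_exp M F (\<lambda>\<omega>. ennreal ((norm (W \<omega>))\<^sup>2)) \<omega> \<le> ennreal c"
    and hF: "h \<in> borel_measurable F" and h0: "\<And>\<omega>. \<omega> \<in> space M \<Longrightarrow> h \<omega> \<ge> 0"
    and hi: "integrable M h" and c0: "c \<ge> 0"
  shows "integrable M (\<lambda>\<omega>. h \<omega> * (norm (W \<omega>))\<^sup>2)"
    "(\<integral>\<omega>. h \<omega> * (norm (W \<omega>))\<^sup>2 \<partial>M) \<le> c * (\<integral>\<omega>. h \<omega> \<partial>M)"
proof -
  have hM[measurable]: "h \<in> borel_measurable M" by (rule sigma_finite_subalgebra_borel_measurable[OF sub hF])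
  have [measurable]: "W \<in> borel_measurable M" by fact
  have [measurable]: "(\<lambda>\<omega>. ennreal (h \<omega>)) \<in> borel_measurable F" using hF by measurable
  have int0: "0 \<le> (\<integral>\<omega>. h \<omega> \<partial>M)" by (rule integral_nonneg_AE) (use h0 in auto)
  have "(\<integral>\<^sup>+\<omega>. ennreal (h \<omega> * (norm (W \<omega>))\<^sup>2) \<partial>M) = (\<integral>\<^sup>+\<omega>. ennreal (h \<omega>) * ennreal ((norm (W \<omega>))\<^sup>2) \<partial>M)"
    by (rule nn_integral_cong) (use h0 in \<open>simp add: ennreal_mult\<close>)
  also have "\<dots> = (\<integral>\<^sup>+\<omega>. ennreal (h \<omega>) * nn_cond_exp M F (\<lambda>\<omega>. ennreal ((norm (W \<omega>))\<^sup>2)) \<omega> \<partial>M)"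
    by (rule sigma_finite_subalgebra.nn_cond_exp_intg[OF sub, symmetric]) auto
  also have "\<dots> \<le> (\<integral>\<^sup>+\<omega>. ennreal (h \<omega>) * ennreal c \<partial>M)"
    by (rule nn_integral_mono_AE) (use cv in \<open>eventually_elim, auto intro: mult_left_mono\<close>)
  also have "\<dots> = ennreal c * (\<integral>\<^sup>+\<omega>. ennreal (h \<omega>) \<partial>M)"
    by (simp add: nn_integral_cmult mult.commute)
  also have "(\<integral>\<^sup>+\<omega>. ennreal (h \<omega>) \<partial>M) = ennreal (\<integral>\<omega>. h \<omega> \<partial>M)"
    by (rule nn_integral_eq_integral[OF hi]) (use h0 in auto)
  also have "ennreal c * ennreal (\<integral>\<omega>. h \<omega> \<partial>M) = ennreal (c * (\<integral>\<omega>. h \<omega> \<partial>M))"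
    using c0 int0 by (simp add: ennreal_mult)
  finally have le: "(\<integral>\<^sup>+\<omega>. ennreal (h \<omega> * (norm (W \<omega>))\<^sup>2) \<partial>M) \<le> ennreal (c * (\<integral>\<omega>. h \<omega> \<partial>M))" .
  show int: "integrable M (\<lambda>\<omega>. h \<omega> * (norm (W \<omega>))\<^sup>2)"
  proof (rule integrableI_nonneg)
    show "(\<integral>\<^sup>+\<omega>. ennreal (h \<omega> * (norm (W \<omega>))\<^sup>2) \<partial>M) < \<infinity>"
      using le ennreal_less_top[of "c * (\<integral>\<omega>. h \<omega> \<partial>M)"] by (simp add: le_less_trans)
  qed (use h0 in auto)
  have "(\<integral>\<^sup>+\<omega>. ennreal (h \<omega> * (norm (W \<omega>))\<^sup>2) \<partial>M) = ennreal (\<integral>\<omega>. h \<omega> * (norm (W \<omega>))\<^sup>2 \<partial>M)"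
    by (rule nn_integral_eq_integral[OF int]) (use h0 in auto)
  with le show "(\<integral>\<omega>. h \<omega> * (norm (W \<omega>))\<^sup>2 \<partial>M) \<le> c * (\<integral>\<omega>. h \<omega> \<partial>M)"
    using c0 int0 by (simp add: ennreal_le_iff)
qed

lemma real_cond_exp_inner_eq_zero:
  fixes Y W :: "'w \<Rightarrow> 'a::euclidean_space"
  assumes sub: "sigma_finite_subalgebra M F"
    and Y: "Y \<in> borel_measurable F" and Y_sq: "integrable M (\<lambda>\<omega>. (norm (Y \<omega>))\<^sup>2)"
    and W: "W \<in> borel_measurable M" and W_sq: "integrable M (\<lambda>\<omega>. (norm (W \<omega>))\<^sup>2)"
    and ce: "\<And>i. i \<in> Basis \<Longrightarrow> AE \<omega> in M. real_cond_exp M F (\<lambda>\<omega>. W \<omega> \<bullet> i) \<omega> = 0"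
  shows "integrable M (\<lambda>\<omega>. Y \<omega> \<bullet> W \<omega>)" "AE \<omega> in M. real_cond_exp M F (\<lambda>\<omega>. Y \<omega> \<bullet> W \<omega>) \<omega> = 0"
proof -
  have YM: "Y \<in> borel_measurable M" by (rule sigma_finite_subalgebra_borel_measurable[OF sub Y])
  have coord: "(\<lambda>\<omega>. Z \<omega> \<bullet> i) \<in> borel_measurable N" if "Z \<in> borel_measurable N" for Z :: "'w \<Rightarrow> 'a" and i N
    using borel_measurable_inner[OF that borel_measurable_const] .
  have coord_sq: "integrable M (\<lambda>\<omega>. (Z \<omega> \<bullet> i)\<^sup>2)"
    if Z: "Z \<in> borel_measurable M" and Z_sq: "integrable M (\<lambda>\<omega>. (norm (Z \<omega>))\<^sup>2)"
    for Z :: "'w \<Rightarrow> 'a" and i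
  proof (rule integrable_nonneg_dominated(1)[where H = "\<lambda>\<omega>. (norm i)\<^sup>2 * (norm (Z \<omega>))\<^sup>2"])
    show "integrable M (\<lambda>\<omega>. (norm i)\<^sup>2 * (norm (Z \<omega>))\<^sup>2)" using Z_sq by (rule integrable_mult_right)
    show "(\<lambda>\<omega>. (Z \<omega> \<bullet> i)\<^sup>2) \<in> borel_measurable M" using coord[OF Z] by (rule borel_measurable_power)
    show "(Z \<omega> \<bullet> i)\<^sup>2 \<le> (norm i)\<^sup>2 * (norm (Z \<omega>))\<^sup>2" for \<omega>
    proof -
      have "\<bar>Z \<omega> \<bullet> i\<bar> \<le> \<bar>norm i * norm (Z \<omega>)\<bar>"
        using Cauchy_Schwarz_ineq2[of "Z \<omega>" i] by (simp add: mult.commute)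
      then show ?thesis by (simp only: abs_le_square_iff power_mult_distrib)
    qed
  qed simp
  have int: "integrable M (\<lambda>\<omega>. (Y \<omega> \<bullet> i) * (W \<omega> \<bullet> i))" for i
    by (rule integrable_mult_if_square_integrable[OF coord_sq[OF YM Y_sq] coord_sq[OF W W_sq]
          coord[OF YM] coord[OF W]])
  have eq: "(\<lambda>\<omega>. Y \<omega> \<bullet> W \<omega>) = (\<lambda>\<omega>. \<Sum>i\<in>Basis. (Y \<omega> \<bullet> i) * (W \<omega> \<bullet> i))"
    by (rule ext) (rule euclidean_inner)
  show "integrable M (\<lambda>\<omega>. Y \<omega> \<bullet> W \<omega>)" unfolding eq using int by auto
  have "AE \<omega> in M. real_cond_exp M F (\<lambda>\<omega>. (Y \<omega> \<bullet> i) * (W \<omega> \<bullet> i)) \<omega>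
      = (Y \<omega> \<bullet> i) * real_cond_exp M F (\<lambda>\<omega>. W \<omega> \<bullet> i) \<omega>" for i
    by (rule sigma_finite_subalgebra.real_cond_exp_mult[OF sub coord[OF Y] coord[OF W] int])
  then have "AE \<omega> in M. \<forall>i\<in>Basis. real_cond_exp M F (\<lambda>\<omega>. (Y \<omega> \<bullet> i) * (W \<omega> \<bullet> i)) \<omega>
      = (Y \<omega> \<bullet> i) * real_cond_exp M F (\<lambda>\<omega>. W \<omega> \<bullet> i) \<omega>"
    by (intro AE_finite_allI) auto
  moreover have "AE \<omega> in M. \<forall>i\<in>Basis. real_cond_exp M F (\<lambda>\<omega>. W \<omega> \<bullet> i) \<omega> = 0"
    using ce by (intro AE_finite_allI) auto
  moreover have "AE \<omega> in M. real_cond_exp M F (\<lambda>\<omega>. \<Sum>i\<in>Basis. (Y \<omega> \<bullet> i) * (W \<omega> \<bullet> i)) \<omega>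
      = (\<Sum>i\<in>Basis. real_cond_exp M F (\<lambda>\<omega>. (Y \<omega> \<bullet> i) * (W \<omega> \<bullet> i)) \<omega>)"
    by (rule sigma_finite_subalgebra.real_cond_exp_sum[OF sub int])
  ultimately show "AE \<omega> in M. real_cond_exp M F (\<lambda>\<omega>. Y \<omega> \<bullet> W \<omega>) \<omega> = 0"
    unfolding eq by eventually_elim simp
qed

text \<open>Transforming martingale differences by a predictable \<open>{0, 1}\<close>-valued sequence does not
  increase second moments: the cross terms vanish by orthogonality.\<close>
lemma martingale_transform_second_moment:
  fixes M :: "'w measure" and F :: "nat \<Rightarrow> 'w measure" and \<zeta> p :: "nat \<Rightarrow> 'w \<Rightarrow> real"
  assumes sub: "\<And>k. sigma_finite_subalgebra M (F k)"
    and mono: "\<And>k. sets (F k) \<subseteq> sets (F (Suc k))"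
    and meas: "\<And>k. \<zeta> k \<in> borel_measurable (F (Suc k))"
    and sq: "\<And>k. integrable M (\<lambda>\<omega>. (\<zeta> k \<omega>)\<^sup>2)"
    and ce: "\<And>k. AE \<omega> in M. real_cond_exp M (F k) (\<zeta> k) \<omega> = 0"
    and p: "\<And>k. p k \<in> borel_measurable (F k)" and p01: "\<And>k \<omega>. p k \<omega> = 0 \<or> p k \<omega> = 1"
  shows "integrable M (\<lambda>\<omega>. (\<Sum>j<n. \<zeta> j \<omega> * p j \<omega>)\<^sup>2)
    \<and> (\<integral>\<omega>. (\<Sum>j<n. \<zeta> j \<omega> * p j \<omega>)\<^sup>2 \<partial>M) \<le> (\<Sum>j<n. \<integral>\<omega>. (\<zeta> j \<omega>)\<^sup>2 \<partial>M)"
proof (induction n)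
  case (Suc n)
  let ?T = "\<lambda>\<omega>. \<Sum>j<n. \<zeta> j \<omega> * p j \<omega>"
  have mle: "\<And>j f. j \<le> n \<Longrightarrow> f \<in> borel_measurable (F j) \<Longrightarrow> f \<in> borel_measurable (F n)"
    using filtration_borel_measurable_mono[where M=M and F=F, OF sub mono] by blast
  have \<zeta>M: "\<zeta> k \<in> borel_measurable M" for k by (rule sigma_finite_subalgebra_borel_measurable[OF sub meas])
  have pM: "p k \<in> borel_measurable M" for k by (rule sigma_finite_subalgebra_borel_measurable[OF sub p])
  define Z where "Z \<omega> = ?T \<omega> * p n \<omega>" for \<omega>
  have "?T \<in> borel_measurable (F n)"
    by (intro borel_measurable_sum borel_measurable_times; rule mle[OF _ meas] mle[OF _ p]) auto
  then have ZF: "Z \<in> borel_measurable (F n)" unfolding Z_def using p by (intro borel_measurable_times)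
  have Z_sq: "integrable M (\<lambda>\<omega>. (Z \<omega>)\<^sup>2)"
  proof (rule integrable_nonneg_dominated(1)[where H = "\<lambda>\<omega>. (?T \<omega>)\<^sup>2"])
    show "integrable M (\<lambda>\<omega>. (?T \<omega>)\<^sup>2)" using Suc by simp
    show "(\<lambda>\<omega>. (Z \<omega>)\<^sup>2) \<in> borel_measurable M"
      using sigma_finite_subalgebra_borel_measurable[OF sub ZF] by (rule borel_measurable_power)
    show "(Z \<omega>)\<^sup>2 \<le> (?T \<omega>)\<^sup>2" for \<omega> using p01[of n \<omega>] by (auto simp: Z_def)
  qed simp
  note orth = integral_mult_eq_zero_if_cond_exp_zero[OF sub ZF Z_sq \<zeta>M sq ce]
  have \<zeta>p_sq: "integrable M (\<lambda>\<omega>. (\<zeta> n \<omega> * p n \<omega>)\<^sup>2)"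
  proof (rule integrable_nonneg_dominated(1)[OF sq[of n]])
    show "(\<lambda>\<omega>. (\<zeta> n \<omega> * p n \<omega>)\<^sup>2) \<in> borel_measurable M"
      by (intro borel_measurable_power borel_measurable_times \<zeta>M pM)
    show "(\<zeta> n \<omega> * p n \<omega>)\<^sup>2 \<le> (\<zeta> n \<omega>)\<^sup>2" for \<omega> using p01[of n \<omega>] by auto
  qed simp
  have eq: "(\<Sum>j<Suc n. \<zeta> j \<omega> * p j \<omega>)\<^sup>2 = (?T \<omega>)\<^sup>2 + 2 * (Z \<omega> * \<zeta> n \<omega>) + (\<zeta> n \<omega> * p n \<omega>)\<^sup>2" for \<omega>
    by (simp add: Z_def power2_sum algebra_simps)
  have "(\<integral>\<omega>. (\<Sum>j<Suc n. \<zeta> j \<omega> * p j \<omega>)\<^sup>2 \<partial>M)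
      = (\<integral>\<omega>. (?T \<omega>)\<^sup>2 \<partial>M) + 2 * (\<integral>\<omega>. Z \<omega> * \<zeta> n \<omega> \<partial>M) + (\<integral>\<omega>. (\<zeta> n \<omega> * p n \<omega>)\<^sup>2 \<partial>M)"
    unfolding eq using Suc orth(1) \<zeta>p_sq by simp
  also have "(\<integral>\<omega>. (\<zeta> n \<omega> * p n \<omega>)\<^sup>2 \<partial>M) \<le> (\<integral>\<omega>. (\<zeta> n \<omega>)\<^sup>2 \<partial>M)"
  proof (rule integral_mono[OF \<zeta>p_sq sq])
    show "(\<zeta> n \<omega> * p n \<omega>)\<^sup>2 \<le> (\<zeta> n \<omega>)\<^sup>2" for \<omega> using p01[of n \<omega>] by auto
  qed
  finally show ?case unfolding eq using Suc orth \<zeta>p_sq by simp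
qed simp

text \<open>Stopping the partial sums at the first index \<open>m\<^sub>0\<close> with \<open>\<bar>S m\<^sub>0\<bar> \<ge> \<epsilon>\<close> leaves \<open>S m\<^sub>0\<close>.\<close>
lemma sum_stopped_at_first_exit:
  fixes \<zeta> :: "nat \<Rightarrow> real"
  assumes "\<exists>m\<le>N. \<epsilon> \<le> \<bar>\<Sum>j<m. \<zeta> j\<bar>"
  shows "\<epsilon> \<le> \<bar>\<Sum>j<N. \<zeta> j * (if \<forall>i\<le>j. \<bar>\<Sum>l<i. \<zeta> l\<bar> < \<epsilon> then 1 else 0)\<bar>"
proof -
  define m0 where "m0 = (LEAST m. \<epsilon> \<le> \<bar>\<Sum>j<m. \<zeta> j\<bar>)"
  have m0: "\<epsilon> \<le> \<bar>\<Sum>j<m0. \<zeta> j\<bar>" "m0 \<le> N"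
    unfolding m0_def using assms by (meson LeastI Least_le order_trans)+
  have before: "\<bar>\<Sum>l<i. \<zeta> l\<bar> < \<epsilon>" if "i < m0" for i
    using not_less_Least[OF that[unfolded m0_def]] by simp
  have "(\<forall>i\<le>j. \<bar>\<Sum>l<i. \<zeta> l\<bar> < \<epsilon>) \<longleftrightarrow> j < m0" for j
  proof
    assume "\<forall>i\<le>j. \<bar>\<Sum>l<i. \<zeta> l\<bar> < \<epsilon>"
    then show "j < m0" using m0(1) by (meson not_le not_less)
  qed (use before in auto)
  then have "(\<Sum>j<N. \<zeta> j * (if \<forall>i\<le>j. \<bar>\<Sum>l<i. \<zeta> l\<bar> < \<epsilon> then 1 else 0))
      = (\<Sum>j\<in>{..<N}. if j \<in> {..<m0} then \<zeta> j else 0)"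
    by (intro sum.cong) auto
  also have "\<dots> = (\<Sum>j\<in>{..<N} \<inter> {..<m0}. \<zeta> j)" by (simp add: sum.inter_restrict)
  also have "{..<N} \<inter> {..<m0} = {..<m0}" using m0(2) by auto
  finally show ?thesis using m0(1) by simp
qed

lemma kolmogorov_maximal_inequality:
  fixes M :: "'w measure" and F :: "nat \<Rightarrow> 'w measure" and \<zeta> :: "nat \<Rightarrow> 'w \<Rightarrow> real"
  assumes P: "prob_space M" and sub: "\<And>k. sigma_finite_subalgebra M (F k)"
    and mono: "\<And>k. sets (F k) \<subseteq> sets (F (Suc k))"
    and meas: "\<And>k. \<zeta> k \<in> borel_measurable (F (Suc k))"
    and sq: "\<And>k. integrable M (\<lambda>\<omega>. (\<zeta> k \<omega>)\<^sup>2)"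
    and ce: "\<And>k. AE \<omega> in M. real_cond_exp M (F k) (\<zeta> k) \<omega> = 0"
    and \<epsilon>: "\<epsilon> > 0"
  shows "measure M {\<omega>\<in>space M. \<exists>m\<le>N. \<epsilon> \<le> \<bar>\<Sum>j<m. \<zeta> j \<omega>\<bar>}
    \<le> (\<Sum>j<N. \<integral>\<omega>. (\<zeta> j \<omega>)\<^sup>2 \<partial>M) / \<epsilon>\<^sup>2"
proof -
  interpret prob_space M by fact
  have mle: "\<And>j k f. j \<le> k \<Longrightarrow> f \<in> borel_measurable (F j) \<Longrightarrow> f \<in> borel_measurable (F k)"
    using filtration_borel_measurable_mono[where M=M and F=F, OF sub mono] by blast
  define S where "S m \<omega> = (\<Sum>j<m. \<zeta> j \<omega>)" for m \<omega>
  define e where "e i \<omega> = (if \<bar>S i \<omega>\<bar> < \<epsilon> then 1 else (0::real))" for i \<omega>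
  define p where "p j \<omega> = (\<Prod>i\<le>j. e i \<omega>)" for j \<omega>
  define T where "T \<omega> = (\<Sum>j<N. \<zeta> j \<omega> * p j \<omega>)" for \<omega>
  have [measurable]: "S m \<in> borel_measurable (F m)" for m
    unfolding S_def by (rule borel_measurable_sum) (rule mle[OF _ meas]; simp)
  have eF: "e i \<in> borel_measurable (F i)" for i unfolding e_def by measurable
  have pF: "p j \<in> borel_measurable (F j)" for j
    unfolding p_def by (rule borel_measurable_prod) (rule mle[OF _ eF]; simp)
  have p_eq: "p j \<omega> = (if \<forall>i\<le>j. \<bar>S i \<omega>\<bar> < \<epsilon> then 1 else 0)" for j \<omega>
    by (induction j) (auto simp: p_def e_def le_Suc_eq)
  then have p01: "p j \<omega> = 0 \<or> p j \<omega> = 1" for j \<omega> by simp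
  note moment = martingale_transform_second_moment[where M=M and F=F and \<zeta>=\<zeta> and p=p and n=N,
      OF sub mono meas sq ce pF p01]
  have [measurable]: "\<zeta> j \<in> borel_measurable M" "p j \<in> borel_measurable M" for j
    using sigma_finite_subalgebra_borel_measurable[OF sub] meas pF by blast+
  have TM: "T \<in> borel_measurable M" unfolding T_def by measurable
  have stopped: "\<epsilon> \<le> \<bar>T \<omega>\<bar>" if "\<exists>m\<le>N. \<epsilon> \<le> \<bar>S m \<omega>\<bar>" for \<omega>
    using sum_stopped_at_first_exit[of N \<epsilon> "\<lambda>j. \<zeta> j \<omega>"] that by (simp add: T_def p_eq S_def)
  have "{\<omega>\<in>space M. \<exists>m\<le>N. \<epsilon> \<le> \<bar>\<Sum>j<m. \<zeta> j \<omega>\<bar>} \<subseteq> {\<omega>\<in>space M. \<epsilon>\<^sup>2 \<le> (T \<omega>)\<^sup>2}"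
    using stopped \<epsilon> by (auto simp: S_def abs_le_square_iff[symmetric])
  then have "measure M {\<omega>\<in>space M. \<exists>m\<le>N. \<epsilon> \<le> \<bar>\<Sum>j<m. \<zeta> j \<omega>\<bar>} \<le> measure M {\<omega>\<in>space M. \<epsilon>\<^sup>2 \<le> (T \<omega>)\<^sup>2}"
    using TM by (intro finite_measure_mono) measurable
  also have "\<dots> \<le> (\<integral>\<omega>. (T \<omega>)\<^sup>2 \<partial>M) / \<epsilon>\<^sup>2"
    by (rule integral_Markov_inequality_measure[where A = "space M"]) (use moment \<epsilon> TM in \<open>auto simp: T_def\<close>)
  also have "\<dots> \<le> (\<Sum>j<N. \<integral>\<omega>. (\<zeta> j \<omega>)\<^sup>2 \<partial>M) / \<epsilon>\<^sup>2"
    by (rule divide_right_mono) (use moment in \<open>auto simp: T_def\<close>)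
  finally show ?thesis .
qed

lemma summable_if_tail_partial_sums_small:
  fixes f :: "nat \<Rightarrow> real"
  assumes small: "\<forall>k::nat. \<exists>n. \<forall>m. \<bar>\<Sum>j<m. f (j + n)\<bar> < 1 / Suc k"
  shows "summable f"
  unfolding summable_Cauchy
proof (intro allI impI)
  fix e :: real assume e: "0 < e"
  obtain k where k: "inverse (real (Suc k)) < e / 2" using reals_Archimedean[of "e / 2"] e by auto
  obtain n0 where n0: "\<And>m. \<bar>\<Sum>j<m. f (j + n0)\<bar> < 1 / Suc k" using small by blast
  have "sum f {n0..<n0 + q} = (\<Sum>j<q. f (j + n0))" for q
  proof -
    have "sum f {0 + n0..<q + n0} = sum (f \<circ> plus n0) {0..<q}"
      by (rule sum.atLeastLessThan_shift_bounds)
    then show ?thesis by (simp add: add.commute lessThan_atLeast0)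
  qed
  then have block: "\<bar>sum f {n0..<n0 + q}\<bar> < e / 2" for q
    using n0[of q] k by (simp add: inverse_eq_divide)
  show "\<exists>N. \<forall>m\<ge>N. \<forall>n. norm (sum f {m..<n}) < e"
  proof (intro exI allI impI)
    fix m n assume m: "n0 \<le> m"
    show "norm (sum f {m..<n}) < e"
    proof (cases "n \<le> m")
      case False
      have "sum f {n0..<n} - sum f {n0..<m} = sum f {m..<n}"
        by (rule sum_diff_nat_ivl) (use m False in auto)
      moreover have "\<bar>sum f {n0..<n}\<bar> < e / 2" using block[of "n - n0"] m False by simp
      moreover have "\<bar>sum f {n0..<m}\<bar> < e / 2" using block[of "m - n0"] m by simp
      ultimately show ?thesis by simp
    qed (use e in simp)
  qed
qed

text \<open>Kolmogorov's inequality applied to the shifted sequence bounds the probability of a large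
  tail partial sum by the tail of the summable second moments.\<close>
lemma martingale_difference_tail_small_AE:
  fixes M :: "'w measure" and F :: "nat \<Rightarrow> 'w measure" and \<zeta> :: "nat \<Rightarrow> 'w \<Rightarrow> real"
  assumes P: "prob_space M" and sub: "\<And>k. sigma_finite_subalgebra M (F k)"
    and mono: "\<And>k. sets (F k) \<subseteq> sets (F (Suc k))"
    and meas: "\<And>k. \<zeta> k \<in> borel_measurable (F (Suc k))"
    and sq: "\<And>k. integrable M (\<lambda>\<omega>. (\<zeta> k \<omega>)\<^sup>2)"
    and ce: "\<And>k. AE \<omega> in M. real_cond_exp M (F k) (\<zeta> k) \<omega> = 0"
    and sum_sq: "summable (\<lambda>k. \<integral>\<omega>. (\<zeta> k \<omega>)\<^sup>2 \<partial>M)"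
    and \<epsilon>: "\<epsilon> > 0"
  shows "AE \<omega> in M. \<exists>n. \<forall>m. \<bar>\<Sum>j<m. \<zeta> (j + n) \<omega>\<bar> < \<epsilon>"
proof -
  interpret prob_space M by fact
  have [measurable]: "\<zeta> k \<in> borel_measurable M" for k
    using sigma_finite_subalgebra_borel_measurable[OF sub meas] .
  define tl where "tl n = (\<Sum>j. \<integral>\<omega>. (\<zeta> (j + n) \<omega>)\<^sup>2 \<partial>M)" for n
  define A where "A n N = {\<omega>\<in>space M. \<exists>m\<le>N. \<epsilon> \<le> \<bar>\<Sum>j<m. \<zeta> (j + n) \<omega>\<bar>}" for n N
  define Bad where "Bad = {\<omega>\<in>space M. \<forall>n. \<exists>m. \<epsilon> \<le> \<bar>\<Sum>j<m. \<zeta> (j + n) \<omega>\<bar>}"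
  have A_sets: "A n N \<in> sets M" for n N unfolding A_def by measurable
  have "measure M (A n N) \<le> (\<Sum>j<N. \<integral>\<omega>. (\<zeta> (j + n) \<omega>)\<^sup>2 \<partial>M) / \<epsilon>\<^sup>2" for n N
    unfolding A_def
    by (rule kolmogorov_maximal_inequality[where F = "\<lambda>j. F (j + n)", OF P])
       (use sub mono meas sq ce \<epsilon> in auto)
  also have "(\<Sum>j<N. \<integral>\<omega>. (\<zeta> (j + n) \<omega>)\<^sup>2 \<partial>M) \<le> tl n" for n N
    unfolding tl_def
    using sum_sq summable_iff_shift[of "\<lambda>k. \<integral>\<omega>. (\<zeta> k \<omega>)\<^sup>2 \<partial>M" n]
    by (intro sum_le_suminf) auto
  finally have A_le: "measure M (A n N) \<le> tl n / \<epsilon>\<^sup>2" for n N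
    using \<epsilon> by (simp add: divide_right_mono)
  have lim: "(\<lambda>N. measure M (A n N)) \<longlonglongrightarrow> measure M (\<Union>N. A n N)" for n
    using A_sets by (intro finite_Lim_measure_incseq incseq_SucI) (auto simp: A_def intro: le_SucI)
  have "measure M (\<Union>N. A n N) \<le> tl n / \<epsilon>\<^sup>2" for n
    by (rule LIMSEQ_le_const2[OF lim]) (use A_le in auto)
  moreover have "Bad \<subseteq> (\<Union>N. A n N)" for n by (force simp: Bad_def A_def)
  ultimately have Bad_le: "measure M Bad \<le> tl n / \<epsilon>\<^sup>2" for n
    using A_sets by (meson finite_measure_mono sets.countable_UN order_trans UNIV_I image_subset_iff)
  have "(\<lambda>n. tl n / \<epsilon>\<^sup>2) \<longlonglongrightarrow> 0 / \<epsilon>\<^sup>2"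
    unfolding tl_def using \<epsilon> by (intro tendsto_intros suminf_tail_tendsto_zero[OF sum_sq]) simp
  then have "measure M Bad \<le> 0" using Bad_le by (intro LIMSEQ_le_const) auto
  moreover have "Bad \<in> sets M" unfolding Bad_def by measurable
  ultimately have "Bad \<in> null_sets M" by (simp add: measure_le_0_iff emeasure_eq_measure null_sets_def)
  then show ?thesis by (rule AE_I') (auto simp: Bad_def not_less)
qed

lemma martingale_difference_summable_AE:
  fixes M :: "'w measure" and F :: "nat \<Rightarrow> 'w measure" and \<zeta> :: "nat \<Rightarrow> 'w \<Rightarrow> real"
  assumes P: "prob_space M" and sub: "\<And>k. sigma_finite_subalgebra M (F k)"
    and mono: "\<And>k. sets (F k) \<subseteq> sets (F (Suc k))"
    and meas: "\<And>k. \<zeta> k \<in> borel_measurable (F (Suc k))"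
    and sq: "\<And>k. integrable M (\<lambda>\<omega>. (\<zeta> k \<omega>)\<^sup>2)"
    and ce: "\<And>k. AE \<omega> in M. real_cond_exp M (F k) (\<zeta> k) \<omega> = 0"
    and sum_sq: "summable (\<lambda>k. \<integral>\<omega>. (\<zeta> k \<omega>)\<^sup>2 \<partial>M)"
  shows "AE \<omega> in M. summable (\<lambda>k. \<zeta> k \<omega>)"
proof -
  have "AE \<omega> in M. \<forall>k::nat. \<exists>n. \<forall>m. \<bar>\<Sum>j<m. \<zeta> (j + n) \<omega>\<bar> < 1 / Suc k"
    using martingale_difference_tail_small_AE[OF assms]
    by (subst AE_all_countable) auto
  then show ?thesis by eventually_elim (rule summable_if_tail_partial_sums_small)
qed

lemma noise_filtration_properties:
  fixes M :: "'w measure" and x0 :: "'w \<Rightarrow> 'a::topological_space" and t0 :: "'w \<Rightarrow> 'b::topological_space"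
  assumes P: "prob_space M" and x0: "x0 \<in> borel_measurable M" and t0: "t0 \<in> borel_measurable M"
    and w: "\<And>k. w k \<in> borel_measurable M" and v: "\<And>k. v k \<in> borel_measurable M"
  shows "sigma_finite_subalgebra M (noise_filtration M x0 t0 w v k)"
    and "sets (noise_filtration M x0 t0 w v k) \<subseteq> sets (noise_filtration M x0 t0 w v (Suc k))"
    and "x0 \<in> borel_measurable (noise_filtration M x0 t0 w v k)"
    and "t0 \<in> borel_measurable (noise_filtration M x0 t0 w v k)"
    and "l < k \<Longrightarrow> w l \<in> borel_measurable (noise_filtration M x0 t0 w v k)"
    and "l < k \<Longrightarrow> v l \<in> borel_measurable (noise_filtration M x0 t0 w v k)"
proof -
  let ?N = "\<lambda>k. noise_filtration M x0 t0 w v k"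
  define G where "G k = {x0 -` A \<inter> space M | A. A \<in> sets borel} \<union> {t0 -` A \<inter> space M | A. A \<in> sets borel}
      \<union> (\<Union>l\<in>{..<k}. {w l -` A \<inter> space M | A. A \<in> sets borel} \<union> {v l -` A \<inter> space M | A. A \<in> sets borel})" for k
  have "G j \<subseteq> Pow (space M)" for j unfolding G_def by auto
  then have space_N: "space (?N j) = space M" and sets_N: "sets (?N j) = sigma_sets (space M) (G j)" for j
    unfolding noise_filtration_def G_def[symmetric] by simp_all
  have "G j \<subseteq> sets M" for j unfolding G_def
    using measurable_sets[OF x0] measurable_sets[OF t0] measurable_sets[OF w] measurable_sets[OF v]
    by blast
  then have sub: "subalgebra M (?N k)"
    unfolding subalgebra_def using space_N sets_N sets.sigma_sets_subset[of "G k" M] by simp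
  interpret finite_measure M using P by (simp add: prob_space_def)
  have "finite_measure_subalgebra M (?N k)" using sub
    by (simp add: finite_measure_subalgebra_def finite_measure_subalgebra_axioms_def finite_measure_axioms)
  then show "sigma_finite_subalgebra M (?N k)" by (rule finite_measure_subalgebra_is_sigma_finite)
  have "G k \<subseteq> G (Suc k)" unfolding G_def by (intro Un_mono UN_mono) auto
  then show "sets (?N k) \<subseteq> sets (?N (Suc k))" using sets_N by (simp add: sigma_sets_mono')
  have gen: "f \<in> borel_measurable (?N k)"
    if pre: "\<And>A. A \<in> sets borel \<Longrightarrow> f -` A \<inter> space M \<in> G k" for f :: "'w \<Rightarrow> 'c::topological_space"
  proof (rule measurableI)
    show "f -` A \<inter> space (?N k) \<in> sets (?N k)" if "A \<in> sets borel" for A :: "'c set"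
      using pre[OF that] space_N sets_N by (auto intro: sigma_sets.Basic)
  qed simp
  show "x0 \<in> borel_measurable (?N k)" by (rule gen) (auto simp: G_def)
  show "t0 \<in> borel_measurable (?N k)" by (rule gen) (auto simp: G_def)
  show "w l \<in> borel_measurable (?N k)" if "l < k" by (rule gen) (use that in \<open>auto simp: G_def\<close>)
  show "v l \<in> borel_measurable (?N k)" if "l < k" by (rule gen) (use that in \<open>auto simp: G_def\<close>)
qed

lemma borel_measurable_continuous_on_comp:
  assumes "continuous_on S \<phi>" and "f \<in> borel_measurable N"
    and "\<And>\<omega>. \<omega> \<in> space N \<Longrightarrow> f \<omega> \<in> S"
  shows "(\<lambda>\<omega>. \<phi> (f \<omega>)) \<in> borel_measurable N"
proof -
  have "f \<in> measurable N (restrict_space borel S)"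
    by (rule measurable_restrict_space2) (use assms in auto)
  from measurable_comp[OF this borel_measurable_continuous_on_restrict[OF assms(1)]] show ?thesis
    by (simp add: comp_def)
qed

section \<open>The coupled projected stochastic approximation scheme\<close>

locale coupled_projected_sa = prob_space M
  for M :: "'w measure"
    and X :: "'a::euclidean_space set" and \<Theta> :: "'b::euclidean_space set"
    and f :: "'a \<Rightarrow> 'b \<Rightarrow> real" and g :: "'b \<Rightarrow> real"
    and gradx :: "'a \<Rightarrow> 'b \<Rightarrow> 'a" and gradg :: "'b \<Rightarrow> 'b"
    and x :: "nat \<Rightarrow> 'w \<Rightarrow> 'a" and \<theta> :: "nat \<Rightarrow> 'w \<Rightarrow> 'b"
    and w :: "nat \<Rightarrow> 'w \<Rightarrow> 'a" and v :: "nat \<Rightarrow> 'w \<Rightarrow> 'b"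
    and \<gamma> :: "nat \<Rightarrow> real" and q \<mu>x \<mu>\<theta> Lx L\<theta> C\<theta> \<nu>x \<nu>\<theta> :: real +
  assumes X: "X \<noteq> {}" "closed X" "convex X"
    and \<Theta>: "\<Theta> \<noteq> {}" "closed \<Theta>" "convex \<Theta>"
    and \<mu>x: "\<mu>x > 0"
    and f_sc: "\<And>t. t \<in> \<Theta> \<Longrightarrow> strongly_convex_on X (\<lambda>y. f y t) \<mu>x"
    and f_deriv: "\<And>t y. t \<in> \<Theta> \<Longrightarrow> y \<in> X \<Longrightarrow>
        ((\<lambda>z. f z t) has_derivative (\<lambda>h. gradx y t \<bullet> h)) (at y)"
    and f_Lx: "\<And>t y z. t \<in> \<Theta> \<Longrightarrow> y \<in> X \<Longrightarrow> z \<in> X \<Longrightarrow>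
        norm (gradx y t - gradx z t) \<le> Lx * norm (y - z)"
    and f_Lt: "\<And>y t s. y \<in> X \<Longrightarrow> t \<in> \<Theta> \<Longrightarrow> s \<in> \<Theta> \<Longrightarrow>
        norm (gradx y t - gradx y s) \<le> L\<theta> * norm (t - s)"
    and \<mu>\<theta>: "\<mu>\<theta> > 0"
    and g_sc: "strongly_convex_on \<Theta> g \<mu>\<theta>"
    and g_deriv: "\<And>t. t \<in> \<Theta> \<Longrightarrow> (g has_derivative (\<lambda>h. gradg t \<bullet> h)) (at t)"
    and g_cont: "continuous_on \<Theta> gradg"
    and g_C: "\<And>t s. t \<in> \<Theta> \<Longrightarrow> s \<in> \<Theta> \<Longrightarrow> norm (gradg t - gradg s) \<le> C\<theta> * norm (t - s)"
    and \<gamma>_pos: "\<And>k. \<gamma> k > 0" and \<gamma>_sum: "\<not> summable \<gamma>" and \<gamma>_sq: "summable (\<lambda>k. (\<gamma> k)\<^sup>2)"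
    and q: "q > 0" and q_large: "L\<theta>\<^sup>2 \<le> q * \<mu>x * \<mu>\<theta>"
    and x0: "x 0 \<in> borel_measurable M" "\<And>\<omega>. \<omega> \<in> space M \<Longrightarrow> x 0 \<omega> \<in> X"
    and \<theta>0: "\<theta> 0 \<in> borel_measurable M" "\<And>\<omega>. \<omega> \<in> space M \<Longrightarrow> \<theta> 0 \<omega> \<in> \<Theta>"
    and w_meas: "\<And>k. w k \<in> borel_measurable M"
    and v_meas: "\<And>k. v k \<in> borel_measurable M"
    and x_rec: "\<And>k \<omega>. x (Suc k) \<omega> = closest_point X (x k \<omega> - \<gamma> k *\<^sub>R (gradx (x k \<omega>) (\<theta> k \<omega>) + w k \<omega>))"
    and \<theta>_rec: "\<And>k \<omega>. \<theta> (Suc k) \<omega> = closest_point \<Theta> (\<theta> k \<omega> - (q * \<gamma> k) *\<^sub>R (gradg (\<theta> k \<omega>) + v k \<omega>))"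
    and w_mean: "\<And>k b. b \<in> Basis \<Longrightarrow> AE \<omega> in M.
        real_cond_exp M (noise_filtration M (x 0) (\<theta> 0) w v k) (\<lambda>\<omega>. w k \<omega> \<bullet> b) \<omega> = 0"
    and v_mean: "\<And>k b. b \<in> Basis \<Longrightarrow> AE \<omega> in M.
        real_cond_exp M (noise_filtration M (x 0) (\<theta> 0) w v k) (\<lambda>\<omega>. v k \<omega> \<bullet> b) \<omega> = 0"
    and w_var: "\<And>k. AE \<omega> in M. nn_cond_exp M (noise_filtration M (x 0) (\<theta> 0) w v k)
        (\<lambda>\<omega>. ennreal ((norm (w k \<omega>))\<^sup>2)) \<omega> \<le> ennreal (\<nu>x\<^sup>2)"
    and v_var: "\<And>k. AE \<omega> in M. nn_cond_exp M (noise_filtration M (x 0) (\<theta> 0) w v k)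
        (\<lambda>\<omega>. ennreal ((norm (v k \<omega>))\<^sup>2)) \<omega> \<le> ennreal (\<nu>\<theta>\<^sup>2)"
begin

abbreviation \<F> :: "nat \<Rightarrow> 'w measure" where
  "\<F> k \<equiv> noise_filtration M (x 0) (\<theta> 0) w v k"

definition \<theta>s :: 'b where
  "\<theta>s = (THE t. t \<in> \<Theta> \<and> (\<forall>s\<in>\<Theta>. g t \<le> g s))"

definition xs :: 'a where
  "xs = (THE y. y \<in> X \<and> (\<forall>z\<in>X. f y \<theta>s \<le> f z \<theta>s))"

lemma theta_star:
  shows "\<theta>s \<in> \<Theta>" "\<forall>t\<in>\<Theta>. g \<theta>s \<le> g t" "\<forall>t\<in>\<Theta>. (\<forall>s\<in>\<Theta>. g t \<le> g s) \<longrightarrow> t = \<theta>s"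
    and "\<forall>t\<in>\<Theta>. gradg \<theta>s \<bullet> (t - \<theta>s) \<ge> 0"
proof -
  obtain t0 where t0: "t0 \<in> \<Theta>" "\<forall>t\<in>\<Theta>. g t0 \<le> g t" "\<forall>t\<in>\<Theta>. (\<forall>s\<in>\<Theta>. g t \<le> g s) \<longrightarrow> t = t0"
      "\<forall>t\<in>\<Theta>. gradg t0 \<bullet> (t - t0) \<ge> 0"
    using strongly_convex_on_minimizer[OF \<Theta>(2,3,1) g_sc \<mu>\<theta> g_deriv] by blast
  have eq: "\<theta>s = t0" unfolding \<theta>s_def
    by (rule the_equality) (use t0 in blast)+
  show "\<theta>s \<in> \<Theta>" "\<forall>t\<in>\<Theta>. g \<theta>s \<le> g t" "\<forall>t\<in>\<Theta>. (\<forall>s\<in>\<Theta>. g t \<le> g s) \<longrightarrow> t = \<theta>s"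
    "\<forall>t\<in>\<Theta>. gradg \<theta>s \<bullet> (t - \<theta>s) \<ge> 0" unfolding eq by (fact t0)+
qed

lemma x_star:
  shows "xs \<in> X" "\<forall>y\<in>X. f xs \<theta>s \<le> f y \<theta>s" "\<forall>y\<in>X. (\<forall>z\<in>X. f y \<theta>s \<le> f z \<theta>s) \<longrightarrow> y = xs"
    and "\<forall>y\<in>X. gradx xs \<theta>s \<bullet> (y - xs) \<ge> 0"
proof -
  obtain y0 where y0: "y0 \<in> X" "\<forall>y\<in>X. f y0 \<theta>s \<le> f y \<theta>s" "\<forall>y\<in>X. (\<forall>z\<in>X. f y \<theta>s \<le> f z \<theta>s) \<longrightarrow> y = y0"
      "\<forall>y\<in>X. gradx y0 \<theta>s \<bullet> (y - y0) \<ge> 0"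
    using strongly_convex_on_minimizer[OF X(2,3,1) f_sc[OF theta_star(1)] \<mu>x, of "\<lambda>y. gradx y \<theta>s"]
      f_deriv[OF theta_star(1)] by blast
  have eq: "xs = y0" unfolding xs_def
    by (rule the_equality) (use y0 in blast)+
  show "xs \<in> X" "\<forall>y\<in>X. f xs \<theta>s \<le> f y \<theta>s" "\<forall>y\<in>X. (\<forall>z\<in>X. f y \<theta>s \<le> f z \<theta>s) \<longrightarrow> y = xs"
    "\<forall>y\<in>X. gradx xs \<theta>s \<bullet> (y - xs) \<ge> 0" unfolding eq by (fact y0)+
qed

lemma x_in_X: "\<omega> \<in> space M \<Longrightarrow> x k \<omega> \<in> X"
  by (cases k) (auto simp: x0 x_rec closest_point_in_set X)

lemma \<theta>_in_\<Theta>: "\<omega> \<in> space M \<Longrightarrow> \<theta> k \<omega> \<in> \<Theta>"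
  by (cases k) (auto simp: \<theta>0 \<theta>_rec closest_point_in_set \<Theta>)

definition lyap :: "nat \<Rightarrow> 'w \<Rightarrow> real" where
  "lyap k \<omega> = (norm (x k \<omega> - xs))\<^sup>2 + (norm (\<theta> k \<omega> - \<theta>s))\<^sup>2"

definition drift_x :: "nat \<Rightarrow> 'w \<Rightarrow> 'a" where
  "drift_x k \<omega> = (x k \<omega> - xs) - \<gamma> k *\<^sub>R (gradx (x k \<omega>) (\<theta> k \<omega>) - gradx xs \<theta>s)"

definition drift_\<theta> :: "nat \<Rightarrow> 'w \<Rightarrow> 'b" where
  "drift_\<theta> k \<omega> = (\<theta> k \<omega> - \<theta>s) - (q * \<gamma> k) *\<^sub>R (gradg (\<theta> k \<omega>) - gradg \<theta>s)"

definition cross :: "nat \<Rightarrow> 'w \<Rightarrow> real" where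
  "cross k \<omega> = - 2 * \<gamma> k * (drift_x k \<omega> \<bullet> w k \<omega>) - 2 * (q * \<gamma> k) * (drift_\<theta> k \<omega> \<bullet> v k \<omega>)"

definition noise_sq :: "nat \<Rightarrow> 'w \<Rightarrow> real" where
  "noise_sq k \<omega> = (\<gamma> k)\<^sup>2 * (norm (w k \<omega>))\<^sup>2 + (q * \<gamma> k)\<^sup>2 * (norm (v k \<omega>))\<^sup>2"

definition rate :: real where "rate = min \<mu>x (q * \<mu>\<theta>)"

definition quad :: real where "quad = 2 * Lx\<^sup>2 + 2 * L\<theta>\<^sup>2 + q\<^sup>2 * C\<theta>\<^sup>2"

lemma lyap_nonneg: "lyap k \<omega> \<ge> 0"
  by (simp add: lyap_def)

lemma drift_x_norm_square_le:
  assumes \<omega>: "\<omega> \<in> space M"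
  shows "(norm (drift_x k \<omega>))\<^sup>2 \<le> (1 - \<gamma> k * \<mu>x + 2 * (\<gamma> k)\<^sup>2 * Lx\<^sup>2) * (norm (x k \<omega> - xs))\<^sup>2
    + (\<gamma> k * (L\<theta>\<^sup>2 / \<mu>x) + 2 * (\<gamma> k)\<^sup>2 * L\<theta>\<^sup>2) * (norm (\<theta> k \<omega> - \<theta>s))\<^sup>2"
proof -
  let ?y = "x k \<omega>" and ?t = "\<theta> k \<omega>"
  have y: "?y \<in> X" and t: "?t \<in> \<Theta>" using x_in_X \<theta>_in_\<Theta> \<omega> by auto
  have "drift_x k \<omega> = (?y - xs) - \<gamma> k *\<^sub>R ((gradx ?y ?t - gradx xs ?t) + (gradx xs ?t - gradx xs \<theta>s))"
    by (simp add: drift_x_def)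
  also have "(norm \<dots>)\<^sup>2 \<le> (1 - \<gamma> k * \<mu>x + 2 * (\<gamma> k)\<^sup>2 * Lx\<^sup>2) * (norm (?y - xs))\<^sup>2
      + (\<gamma> k * L\<theta>\<^sup>2 / \<mu>x + 2 * (\<gamma> k)\<^sup>2 * L\<theta>\<^sup>2) * (norm (?t - \<theta>s))\<^sup>2"
  proof (rule perturbed_monotone_step_norm_square_le[OF _ f_Lx[OF t y x_star(1)] f_Lt[OF x_star(1) t theta_star(1)]])
    show "\<mu>x * (norm (?y - xs))\<^sup>2 \<le> (?y - xs) \<bullet> (gradx ?y ?t - gradx xs ?t)"
      using strongly_convex_on_gradient_monotone[OF f_sc[OF t] f_deriv[OF t y] f_deriv[OF t x_star(1)] y x_star(1)]
      by (simp add: inner_commute)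
  qed (use \<gamma>_pos \<mu>x in \<open>auto simp: less_imp_le\<close>)
  finally show ?thesis by simp
qed

lemma drift_\<theta>_norm_square_le:
  assumes \<omega>: "\<omega> \<in> space M"
  shows "(norm (drift_\<theta> k \<omega>))\<^sup>2 \<le> (1 - 2 * (q * \<gamma> k) * \<mu>\<theta> + (q * \<gamma> k)\<^sup>2 * C\<theta>\<^sup>2) * (norm (\<theta> k \<omega> - \<theta>s))\<^sup>2"
  unfolding drift_\<theta>_def
proof (rule strongly_monotone_step_norm_square_le)
  have t: "\<theta> k \<omega> \<in> \<Theta>" using \<theta>_in_\<Theta> \<omega> by auto
  show "\<mu>\<theta> * (norm (\<theta> k \<omega> - \<theta>s))\<^sup>2 \<le> (\<theta> k \<omega> - \<theta>s) \<bullet> (gradg (\<theta> k \<omega>) - gradg \<theta>s)"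
    using strongly_convex_on_gradient_monotone[OF g_sc g_deriv[OF t] g_deriv[OF theta_star(1)] t theta_star(1)]
    by (simp add: inner_commute)
  show "norm (gradg (\<theta> k \<omega>) - gradg \<theta>s) \<le> C\<theta> * norm (\<theta> k \<omega> - \<theta>s)"
    by (rule g_C[OF t theta_star(1)])
qed (use \<gamma>_pos q in \<open>auto simp: less_imp_le\<close>)

text \<open>The coupling term \<open>\<gamma> L\<theta>\<^sup>2/\<mu>x\<close> from the \<open>x\<close>-step is paid for by the \<open>\<theta>\<close>-step, whose
  contraction \<open>2 q \<gamma> \<mu>\<theta>\<close> is at least twice as large because \<open>L\<theta>\<^sup>2/\<mu>x \<le> q \<mu>\<theta>\<close>.\<close>
lemma drift_contraction:
  assumes \<omega>: "\<omega> \<in> space M"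
  shows "(norm (drift_x k \<omega>))\<^sup>2 + (norm (drift_\<theta> k \<omega>))\<^sup>2
    \<le> lyap k \<omega> - rate * \<gamma> k * lyap k \<omega> + quad * (\<gamma> k)\<^sup>2 * lyap k \<omega>"
proof -
  define E where "E = (norm (x k \<omega> - xs))\<^sup>2"
  define D where "D = (norm (\<theta> k \<omega> - \<theta>s))\<^sup>2"
  define \<rho> where "\<rho> = L\<theta>\<^sup>2 / \<mu>x"
  have \<rho>: "\<rho> \<le> q * \<mu>\<theta>" using q_large \<mu>x by (simp add: \<rho>_def field_simps)
  have g: "\<gamma> k \<ge> 0" using \<gamma>_pos[of k] by simp
  have nonneg: "0 \<le> (\<mu>x - rate) * \<gamma> k * E" "0 \<le> (2 * q * \<mu>\<theta> - \<rho> - rate) * \<gamma> k * D"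
    "0 \<le> (quad - 2 * Lx\<^sup>2) * (\<gamma> k)\<^sup>2 * E" "0 \<le> (quad - 2 * L\<theta>\<^sup>2 - q\<^sup>2 * C\<theta>\<^sup>2) * (\<gamma> k)\<^sup>2 * D"
    using g \<rho> q \<mu>\<theta> by (auto simp: E_def D_def rate_def quad_def)
  have "(1 - \<gamma> k * \<mu>x + 2 * (\<gamma> k)\<^sup>2 * Lx\<^sup>2) * E + (\<gamma> k * \<rho> + 2 * (\<gamma> k)\<^sup>2 * L\<theta>\<^sup>2) * D
      + (1 - 2 * (q * \<gamma> k) * \<mu>\<theta> + (q * \<gamma> k)\<^sup>2 * C\<theta>\<^sup>2) * D
      = (E + D) - rate * \<gamma> k * (E + D) + quad * (\<gamma> k)\<^sup>2 * (E + D)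
        - ((\<mu>x - rate) * \<gamma> k * E + (2 * q * \<mu>\<theta> - \<rho> - rate) * \<gamma> k * D
           + (quad - 2 * Lx\<^sup>2) * (\<gamma> k)\<^sup>2 * E + (quad - 2 * L\<theta>\<^sup>2 - q\<^sup>2 * C\<theta>\<^sup>2) * (\<gamma> k)\<^sup>2 * D)"
    by (simp add: algebra_simps power2_eq_square)
  then show ?thesis
    using drift_x_norm_square_le[OF \<omega>, of k] drift_\<theta>_norm_square_le[OF \<omega>, of k] nonneg
    unfolding lyap_def E_def[symmetric] D_def[symmetric] \<rho>_def[symmetric] by linarith
qed

lemma lyap_step:
  assumes \<omega>: "\<omega> \<in> space M"
  shows "lyap (Suc k) \<omega> \<le> lyap k \<omega> - rate * \<gamma> k * lyap k \<omega> + quad * (\<gamma> k)\<^sup>2 * lyap k \<omega>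
    + cross k \<omega> + noise_sq k \<omega>"
proof -
  have "0 \<le> \<gamma> k" "0 \<le> q * \<gamma> k" using \<gamma>_pos[of k] q by auto
  then have "closest_point X (xs - \<gamma> k *\<^sub>R gradx xs \<theta>s) = xs"
      "closest_point \<Theta> (\<theta>s - (q * \<gamma> k) *\<^sub>R gradg \<theta>s) = \<theta>s"
    using closest_point_gradient_step_fixed[OF X(3,2) x_star(1,4)]
      closest_point_gradient_step_fixed[OF \<Theta>(3,2) theta_star(1,4)] by auto
  from closest_point_noisy_step_dist_square_le[OF X(3,2,1) this(1)]
    closest_point_noisy_step_dist_square_le[OF \<Theta>(3,2,1) this(2)]
  have "(norm (x (Suc k) \<omega> - xs))\<^sup>2
      \<le> (norm (drift_x k \<omega>))\<^sup>2 - 2 * \<gamma> k * (drift_x k \<omega> \<bullet> w k \<omega>) + (\<gamma> k)\<^sup>2 * (norm (w k \<omega>))\<^sup>2"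
    "(norm (\<theta> (Suc k) \<omega> - \<theta>s))\<^sup>2 \<le> (norm (drift_\<theta> k \<omega>))\<^sup>2
      - 2 * (q * \<gamma> k) * (drift_\<theta> k \<omega> \<bullet> v k \<omega>) + (q * \<gamma> k)\<^sup>2 * (norm (v k \<omega>))\<^sup>2"
    by (simp_all only: x_rec \<theta>_rec drift_x_def drift_\<theta>_def)
  with drift_contraction[OF \<omega>, of k] show ?thesis
    by (simp add: lyap_def cross_def noise_sq_def)
qed

lemma filtration:
  shows sub_\<F>: "sigma_finite_subalgebra M (\<F> k)"
    and mono_\<F>: "sets (\<F> k) \<subseteq> sets (\<F> (Suc k))"
    and w_\<F>: "w k \<in> borel_measurable (\<F> (Suc k))"
    and v_\<F>: "v k \<in> borel_measurable (\<F> (Suc k))"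
  using noise_filtration_properties[OF prob_space_axioms x0(1) \<theta>0(1) w_meas v_meas] by auto

lemma \<F>_measurable_mono: "j \<le> k \<Longrightarrow> h \<in> borel_measurable (\<F> j) \<Longrightarrow> h \<in> borel_measurable (\<F> k)"
  using filtration_borel_measurable_mono[where M = M and F = \<F>, OF sub_\<F> mono_\<F>] by blast

lemma \<F>_measurable_imp_measurable: "h \<in> borel_measurable (\<F> k) \<Longrightarrow> h \<in> borel_measurable M"
  using sigma_finite_subalgebra_borel_measurable[OF sub_\<F>] by blast

lemma gradients_measurable:
  assumes "x k \<in> borel_measurable N" "\<theta> k \<in> borel_measurable N" "space N = space M"
  shows "(\<lambda>\<omega>. gradx (x k \<omega>) (\<theta> k \<omega>)) \<in> borel_measurable N"
    and "(\<lambda>\<omega>. gradg (\<theta> k \<omega>)) \<in> borel_measurable N"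
proof -
  have "(\<lambda>\<omega>. (\<lambda>p. gradx (fst p) (snd p)) (x k \<omega>, \<theta> k \<omega>)) \<in> borel_measurable N"
    by (rule borel_measurable_continuous_on_comp[OF continuous_on_Times_if_separately_lipschitz[OF f_Lx f_Lt]])
       (use assms x_in_X \<theta>_in_\<Theta> in \<open>auto intro: borel_measurable_Pair\<close>)
  then show "(\<lambda>\<omega>. gradx (x k \<omega>) (\<theta> k \<omega>)) \<in> borel_measurable N" by simp
  show "(\<lambda>\<omega>. gradg (\<theta> k \<omega>)) \<in> borel_measurable N"
    by (rule borel_measurable_continuous_on_comp[OF g_cont]) (use assms \<theta>_in_\<Theta> in auto)
qed

lemma iterates_adapted: "x k \<in> borel_measurable (\<F> k) \<and> \<theta> k \<in> borel_measurable (\<F> k)"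
proof (induction k)
  case 0
  show ?case using noise_filtration_properties(3,4)[OF prob_space_axioms x0(1) \<theta>0(1) w_meas v_meas] by simp
next
  case (Suc k)
  have space: "space (\<F> (Suc k)) = space M" by (rule sigma_finite_subalgebra_space[OF sub_\<F>])
  have [measurable]: "x k \<in> borel_measurable (\<F> (Suc k))" "\<theta> k \<in> borel_measurable (\<F> (Suc k))"
    "w k \<in> borel_measurable (\<F> (Suc k))" "v k \<in> borel_measurable (\<F> (Suc k))"
    using Suc \<F>_measurable_mono[of k "Suc k"] w_\<F> v_\<F> by auto
  note [measurable] = gradients_measurable[OF this(1,2) space]
  have "(\<lambda>\<omega>. closest_point X (x k \<omega> - \<gamma> k *\<^sub>R (gradx (x k \<omega>) (\<theta> k \<omega>) + w k \<omega>))) \<in> borel_measurable (\<F> (Suc k))"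
    by (rule borel_measurable_continuous_on[OF continuous_on_closest_point[OF X(3,2,1)]]) measurable
  moreover have "(\<lambda>\<omega>. closest_point \<Theta> (\<theta> k \<omega> - (q * \<gamma> k) *\<^sub>R (gradg (\<theta> k \<omega>) + v k \<omega>))) \<in> borel_measurable (\<F> (Suc k))"
    by (rule borel_measurable_continuous_on[OF continuous_on_closest_point[OF \<Theta>(3,2,1)]]) measurable
  ultimately show ?case by (simp add: x_rec[abs_def] \<theta>_rec[abs_def])
qed

lemma adapted_measurable [measurable]:
  shows "lyap k \<in> borel_measurable (\<F> k)"
    and "drift_x k \<in> borel_measurable (\<F> k)"
    and "drift_\<theta> k \<in> borel_measurable (\<F> k)"
proof -
  have space: "space (\<F> k) = space M" by (rule sigma_finite_subalgebra_space[OF sub_\<F>])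
  have [measurable]: "x k \<in> borel_measurable (\<F> k)" "\<theta> k \<in> borel_measurable (\<F> k)"
    using iterates_adapted by auto
  note [measurable] = gradients_measurable[OF this space]
  show "lyap k \<in> borel_measurable (\<F> k)" unfolding lyap_def by measurable
  show "drift_x k \<in> borel_measurable (\<F> k)" unfolding drift_x_def by measurable
  show "drift_\<theta> k \<in> borel_measurable (\<F> k)" unfolding drift_\<theta>_def by measurable
qed

definition \<Gamma> :: real where "\<Gamma> = (\<Sum>k. (\<gamma> k)\<^sup>2)"

definition Ax :: real where "Ax = 3 + 3 * \<Gamma> * (Lx\<^sup>2 + L\<theta>\<^sup>2)"

definition A\<theta> :: real where "A\<theta> = 3 + 3 * (q\<^sup>2 * \<Gamma>) * C\<theta>\<^sup>2"

lemma step_square_le_\<Gamma>: "(\<gamma> k)\<^sup>2 \<le> \<Gamma>"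
  using sum_le_suminf[OF \<gamma>_sq, of "{k}"] by (simp add: \<Gamma>_def)

lemma \<Gamma>_nonneg: "\<Gamma> \<ge> 0"
  using step_square_le_\<Gamma>[of 0] by (meson order_trans zero_le_power2)

lemma drift_x_norm_square_le_lyap:
  assumes \<omega>: "\<omega> \<in> space M"
  shows "(norm (drift_x k \<omega>))\<^sup>2 \<le> Ax * lyap k \<omega>"
proof -
  let ?y = "x k \<omega>" and ?t = "\<theta> k \<omega>"
  have y: "?y \<in> X" and t: "?t \<in> \<Theta>" using x_in_X \<theta>_in_\<Theta> \<omega> by auto
  have "drift_x k \<omega> = (?y - xs) - \<gamma> k *\<^sub>R ((gradx ?y ?t - gradx xs ?t) + (gradx xs ?t - gradx xs \<theta>s))"
    by (simp add: drift_x_def)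
  also have "(norm \<dots>)\<^sup>2 \<le> Ax * lyap k \<omega>"
    unfolding Ax_def lyap_def
    by (rule lipschitz_step_norm_square_le[OF f_Lx[OF t y x_star(1)] f_Lt[OF x_star(1) t theta_star(1)]])
       (use \<gamma>_pos step_square_le_\<Gamma> in \<open>auto simp: less_imp_le\<close>)
  finally show ?thesis .
qed

lemma drift_\<theta>_norm_square_le_lyap:
  assumes \<omega>: "\<omega> \<in> space M"
  shows "(norm (drift_\<theta> k \<omega>))\<^sup>2 \<le> A\<theta> * lyap k \<omega>"
proof -
  have t: "\<theta> k \<omega> \<in> \<Theta>" using \<theta>_in_\<Theta> \<omega> by auto
  have "(q * \<gamma> k)\<^sup>2 \<le> q\<^sup>2 * \<Gamma>"
    using step_square_le_\<Gamma>[of k] q by (simp add: power_mult_distrib)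
  then have "(norm (drift_\<theta> k \<omega>))\<^sup>2 \<le> A\<theta> * ((norm (\<theta> k \<omega> - \<theta>s))\<^sup>2 + 0\<^sup>2)"
    unfolding drift_\<theta>_def A\<theta>_def
    using lipschitz_step_norm_square_le[OF g_C[OF t theta_star(1)], of 0 0 0 "q * \<gamma> k" "q\<^sup>2 * \<Gamma>"]
      \<gamma>_pos[of k] q by simp
  also have "\<dots> \<le> A\<theta> * lyap k \<omega>"
    using \<Gamma>_nonneg by (intro mult_left_mono) (auto simp: lyap_def A\<theta>_def)
  finally show ?thesis .
qed

lemma noise_second_moments:
  assumes h: "h \<in> borel_measurable (\<F> k)" "\<And>\<omega>. \<omega> \<in> space M \<Longrightarrow> h \<omega> \<ge> 0" "integrable M h"
  shows "integrable M (\<lambda>\<omega>. h \<omega> * (norm (w k \<omega>))\<^sup>2)" "(\<integral>\<omega>. h \<omega> * (norm (w k \<omega>))\<^sup>2 \<partial>M) \<le> \<nu>x\<^sup>2 * (\<integral>\<omega>. h \<omega> \<partial>M)"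
    and "integrable M (\<lambda>\<omega>. h \<omega> * (norm (v k \<omega>))\<^sup>2)" "(\<integral>\<omega>. h \<omega> * (norm (v k \<omega>))\<^sup>2 \<partial>M) \<le> \<nu>\<theta>\<^sup>2 * (\<integral>\<omega>. h \<omega> \<partial>M)"
  using integral_mult_norm_square_le_cond_bound[OF sub_\<F> w_meas w_var h zero_le_power2]
    integral_mult_norm_square_le_cond_bound[OF sub_\<F> v_meas v_var h zero_le_power2]
  by (simp_all add: mult.commute)

lemma noise_square_integrable:
  shows "integrable M (\<lambda>\<omega>. (norm (w k \<omega>))\<^sup>2)" "(\<integral>\<omega>. (norm (w k \<omega>))\<^sup>2 \<partial>M) \<le> \<nu>x\<^sup>2"
    and "integrable M (\<lambda>\<omega>. (norm (v k \<omega>))\<^sup>2)" "(\<integral>\<omega>. (norm (v k \<omega>))\<^sup>2 \<partial>M) \<le> \<nu>\<theta>\<^sup>2"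
proof -
  have "(\<lambda>_. 1::real) \<in> borel_measurable (\<F> k)" "\<And>\<omega>. \<omega> \<in> space M \<Longrightarrow> (0::real) \<le> (\<lambda>_. 1) \<omega>"
    "integrable M (\<lambda>_. 1::real)" by simp_all
  note m = noise_second_moments[of "\<lambda>_. 1" k, OF this]
  have "(\<integral>\<omega>. 1 \<partial>M) = (1::real)" by (simp add: prob_space)
  with m show "integrable M (\<lambda>\<omega>. (norm (w k \<omega>))\<^sup>2)" "(\<integral>\<omega>. (norm (w k \<omega>))\<^sup>2 \<partial>M) \<le> \<nu>x\<^sup>2"
    "integrable M (\<lambda>\<omega>. (norm (v k \<omega>))\<^sup>2)" "(\<integral>\<omega>. (norm (v k \<omega>))\<^sup>2 \<partial>M) \<le> \<nu>\<theta>\<^sup>2"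
    by (simp_all only: mult_1 mult_1_right)
qed

definition noise_bound :: real where "noise_bound = \<nu>x\<^sup>2 + q\<^sup>2 * \<nu>\<theta>\<^sup>2"

lemma noise_sq_integrable: "integrable M (noise_sq k)"
  and noise_sq_integral_le: "(\<integral>\<omega>. noise_sq k \<omega> \<partial>M) \<le> noise_bound * (\<gamma> k)\<^sup>2"
proof -
  note moments = noise_square_integrable[of k]
  show "integrable M (noise_sq k)" unfolding noise_sq_def using moments by auto
  have "(\<integral>\<omega>. noise_sq k \<omega> \<partial>M) = (\<gamma> k)\<^sup>2 * (\<integral>\<omega>. (norm (w k \<omega>))\<^sup>2 \<partial>M) + (q * \<gamma> k)\<^sup>2 * (\<integral>\<omega>. (norm (v k \<omega>))\<^sup>2 \<partial>M)"
    unfolding noise_sq_def using moments by simp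
  also have "\<dots> \<le> (\<gamma> k)\<^sup>2 * \<nu>x\<^sup>2 + (q * \<gamma> k)\<^sup>2 * \<nu>\<theta>\<^sup>2"
    using moments by (intro add_mono mult_left_mono) simp_all
  finally show "(\<integral>\<omega>. noise_sq k \<omega> \<partial>M) \<le> noise_bound * (\<gamma> k)\<^sup>2"
    by (simp add: noise_bound_def power_mult_distrib algebra_simps)
qed

text \<open>The initial Lyapunov value need not be integrable, so the moment estimates are carried out
  on the \<open>\<F> 0\<close>-measurable events \<open>lyap 0 \<le> R\<close>, which exhaust the sample space.\<close>
definition start_set :: "nat \<Rightarrow> 'w set" where
  "start_set R = {\<omega> \<in> space M. lyap 0 \<omega> \<le> real R}"

definition loc_lyap :: "nat \<Rightarrow> nat \<Rightarrow> 'w \<Rightarrow> real" where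
  "loc_lyap R k \<omega> = lyap k \<omega> * indicator (start_set R) \<omega>"

definition loc_cross :: "nat \<Rightarrow> nat \<Rightarrow> 'w \<Rightarrow> real" where
  "loc_cross R k \<omega> = cross k \<omega> * indicator (start_set R) \<omega>"

definition weight_x :: "nat \<Rightarrow> nat \<Rightarrow> 'w \<Rightarrow> 'a" where
  "weight_x R k \<omega> = (- 2 * \<gamma> k * indicator (start_set R) \<omega>) *\<^sub>R drift_x k \<omega>"

definition weight_\<theta> :: "nat \<Rightarrow> nat \<Rightarrow> 'w \<Rightarrow> 'b" where
  "weight_\<theta> R k \<omega> = (- 2 * (q * \<gamma> k) * indicator (start_set R) \<omega>) *\<^sub>R drift_\<theta> k \<omega>"

lemma loc_cross_eq: "loc_cross R k \<omega> = weight_x R k \<omega> \<bullet> w k \<omega> + weight_\<theta> R k \<omega> \<bullet> v k \<omega>"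
  by (simp add: loc_cross_def weight_x_def weight_\<theta>_def cross_def algebra_simps)

lemma loc_lyap_nonneg: "loc_lyap R k \<omega> \<ge> 0"
  by (simp add: loc_lyap_def lyap_nonneg)

lemma localized_measurable [measurable]:
  shows "loc_lyap R k \<in> borel_measurable (\<F> k)"
    and "weight_x R k \<in> borel_measurable (\<F> k)"
    and "weight_\<theta> R k \<in> borel_measurable (\<F> k)"
proof -
  have "{\<omega> \<in> space (\<F> 0). lyap 0 \<omega> \<le> real R} \<in> sets (\<F> 0)" by measurable
  then have "start_set R \<in> sets (\<F> 0)"
    by (simp add: start_set_def sigma_finite_subalgebra_space[OF sub_\<F>])
  then have [measurable]: "(\<lambda>\<omega>. indicator (start_set R) \<omega> :: real) \<in> borel_measurable (\<F> k)"
    using \<F>_measurable_mono[of 0 k] borel_measurable_indicator by blast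
  show "loc_lyap R k \<in> borel_measurable (\<F> k)" unfolding loc_lyap_def by measurable
  show "weight_x R k \<in> borel_measurable (\<F> k)" unfolding weight_x_def by measurable
  show "weight_\<theta> R k \<in> borel_measurable (\<F> k)" unfolding weight_\<theta>_def by measurable
qed

lemma loc_cross_measurable: "loc_cross R k \<in> borel_measurable (\<F> (Suc k))"
proof -
  have [measurable]: "weight_x R k \<in> borel_measurable (\<F> (Suc k))" "weight_\<theta> R k \<in> borel_measurable (\<F> (Suc k))"
    "w k \<in> borel_measurable (\<F> (Suc k))" "v k \<in> borel_measurable (\<F> (Suc k))"
    using \<F>_measurable_mono[of k "Suc k", OF _ localized_measurable(2)]
      \<F>_measurable_mono[of k "Suc k", OF _ localized_measurable(3)] w_\<F> v_\<F> by auto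
  show ?thesis unfolding loc_cross_eq[abs_def] by measurable
qed

lemma weight_x_norm_square_le:
  assumes \<omega>: "\<omega> \<in> space M"
  shows "(norm (weight_x R k \<omega>))\<^sup>2 \<le> 4 * (\<gamma> k)\<^sup>2 * Ax * loc_lyap R k \<omega>"
proof (cases "\<omega> \<in> start_set R")
  case True
  then have "(norm (weight_x R k \<omega>))\<^sup>2 = 4 * (\<gamma> k)\<^sup>2 * (norm (drift_x k \<omega>))\<^sup>2"
    "loc_lyap R k \<omega> = lyap k \<omega>"
    by (simp_all add: weight_x_def loc_lyap_def power_mult_distrib)
  with drift_x_norm_square_le_lyap[OF \<omega>, of k] show ?thesis by (simp add: mult_left_mono mult.assoc)
qed (simp add: weight_x_def loc_lyap_def)

lemma weight_\<theta>_norm_square_le: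
  assumes \<omega>: "\<omega> \<in> space M"
  shows "(norm (weight_\<theta> R k \<omega>))\<^sup>2 \<le> 4 * (q * \<gamma> k)\<^sup>2 * A\<theta> * loc_lyap R k \<omega>"
proof (cases "\<omega> \<in> start_set R")
  case True
  then have "(norm (weight_\<theta> R k \<omega>))\<^sup>2 = 4 * (q * \<gamma> k)\<^sup>2 * (norm (drift_\<theta> k \<omega>))\<^sup>2"
    "loc_lyap R k \<omega> = lyap k \<omega>"
    by (simp_all add: weight_\<theta>_def loc_lyap_def power_mult_distrib)
  with drift_\<theta>_norm_square_le_lyap[OF \<omega>, of k] show ?thesis by (simp add: mult_left_mono mult.assoc)
qed (simp add: weight_\<theta>_def loc_lyap_def)

lemma weight_square_integrable:
  assumes int: "integrable M (loc_lyap R k)"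
  shows "integrable M (\<lambda>\<omega>. (norm (weight_x R k \<omega>))\<^sup>2)"
    and "integrable M (\<lambda>\<omega>. (norm (weight_\<theta> R k \<omega>))\<^sup>2)"
proof -
  have [measurable]: "weight_x R k \<in> borel_measurable M" "weight_\<theta> R k \<in> borel_measurable M"
    using \<F>_measurable_imp_measurable localized_measurable by blast+
  have H: "integrable M (\<lambda>\<omega>. c * loc_lyap R k \<omega>)" for c using int by (rule integrable_mult_right)
  show "integrable M (\<lambda>\<omega>. (norm (weight_x R k \<omega>))\<^sup>2)"
  proof (rule integrable_nonneg_dominated(1)[OF H[of "4 * (\<gamma> k)\<^sup>2 * Ax"]])
    show "(norm (weight_x R k \<omega>))\<^sup>2 \<le> 4 * (\<gamma> k)\<^sup>2 * Ax * loc_lyap R k \<omega>" if "\<omega> \<in> space M" for \<omega>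
      by (rule weight_x_norm_square_le[OF that])
  qed measurable
  show "integrable M (\<lambda>\<omega>. (norm (weight_\<theta> R k \<omega>))\<^sup>2)"
  proof (rule integrable_nonneg_dominated(1)[OF H[of "4 * (q * \<gamma> k)\<^sup>2 * A\<theta>"]])
    show "(norm (weight_\<theta> R k \<omega>))\<^sup>2 \<le> 4 * (q * \<gamma> k)\<^sup>2 * A\<theta> * loc_lyap R k \<omega>" if "\<omega> \<in> space M" for \<omega>
      by (rule weight_\<theta>_norm_square_le[OF that])
  qed measurable
qed

lemma loc_cross_cond_exp_zero:
  assumes "integrable M (loc_lyap R k)"
  shows "integrable M (loc_cross R k)" "AE \<omega> in M. real_cond_exp M (\<F> k) (loc_cross R k) \<omega> = 0"
proof -
  have wx: "integrable M (\<lambda>\<omega>. weight_x R k \<omega> \<bullet> w k \<omega>)"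
    "AE \<omega> in M. real_cond_exp M (\<F> k) (\<lambda>\<omega>. weight_x R k \<omega> \<bullet> w k \<omega>) \<omega> = 0"
    using real_cond_exp_inner_eq_zero[OF sub_\<F> localized_measurable(2)
        weight_square_integrable(1)[OF assms] w_meas noise_square_integrable(1)] w_mean
    by blast+
  have wt: "integrable M (\<lambda>\<omega>. weight_\<theta> R k \<omega> \<bullet> v k \<omega>)"
    "AE \<omega> in M. real_cond_exp M (\<F> k) (\<lambda>\<omega>. weight_\<theta> R k \<omega> \<bullet> v k \<omega>) \<omega> = 0"
    using real_cond_exp_inner_eq_zero[OF sub_\<F> localized_measurable(3)
        weight_square_integrable(2)[OF assms] v_meas noise_square_integrable(3)] v_mean
    by blast+
  show "integrable M (loc_cross R k)" unfolding loc_cross_eq[abs_def] using wx(1) wt(1) by simp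
  show "AE \<omega> in M. real_cond_exp M (\<F> k) (loc_cross R k) \<omega> = 0"
    using wx(2) wt(2) sigma_finite_subalgebra.real_cond_exp_add[OF sub_\<F>[of k] wx(1) wt(1)]
    unfolding loc_cross_eq[abs_def] by eventually_elim simp
qed

definition cross_bound :: real where "cross_bound = 8 * (\<nu>x\<^sup>2 * Ax + q\<^sup>2 * \<nu>\<theta>\<^sup>2 * A\<theta>)"

lemma weighted_noise_square_le:
  assumes int: "integrable M (loc_lyap R k)"
  shows "integrable M (\<lambda>\<omega>. (norm (weight_x R k \<omega>))\<^sup>2 * (norm (w k \<omega>))\<^sup>2)"
    "(\<integral>\<omega>. (norm (weight_x R k \<omega>))\<^sup>2 * (norm (w k \<omega>))\<^sup>2 \<partial>M) \<le> \<nu>x\<^sup>2 * (4 * (\<gamma> k)\<^sup>2 * Ax * (\<integral>\<omega>. loc_lyap R k \<omega> \<partial>M))"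
    and "integrable M (\<lambda>\<omega>. (norm (weight_\<theta> R k \<omega>))\<^sup>2 * (norm (v k \<omega>))\<^sup>2)"
    "(\<integral>\<omega>. (norm (weight_\<theta> R k \<omega>))\<^sup>2 * (norm (v k \<omega>))\<^sup>2 \<partial>M) \<le> \<nu>\<theta>\<^sup>2 * (4 * (q * \<gamma> k)\<^sup>2 * A\<theta> * (\<integral>\<omega>. loc_lyap R k \<omega> \<partial>M))"
proof -
  have [measurable]: "weight_x R k \<in> borel_measurable (\<F> k)" "weight_\<theta> R k \<in> borel_measurable (\<F> k)"
    by measurable
  have Hx: "integrable M (\<lambda>\<omega>. 4 * (\<gamma> k)\<^sup>2 * Ax * loc_lyap R k \<omega>)"
    and H\<theta>: "integrable M (\<lambda>\<omega>. 4 * (q * \<gamma> k)\<^sup>2 * A\<theta> * loc_lyap R k \<omega>)"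
    using int by simp_all
  have nonneg: "\<And>\<omega>. \<omega> \<in> space M \<Longrightarrow> 0 \<le> (norm (weight_x R k \<omega>))\<^sup>2"
    "\<And>\<omega>. \<omega> \<in> space M \<Longrightarrow> 0 \<le> (norm (weight_\<theta> R k \<omega>))\<^sup>2" by simp_all
  have \<F>x: "(\<lambda>\<omega>. (norm (weight_x R k \<omega>))\<^sup>2) \<in> borel_measurable (\<F> k)"
    and \<F>\<theta>: "(\<lambda>\<omega>. (norm (weight_\<theta> R k \<omega>))\<^sup>2) \<in> borel_measurable (\<F> k)" by measurable
  note mx = noise_second_moments(1,2)[OF \<F>x nonneg(1) weight_square_integrable(1)[OF int]]
  note m\<theta> = noise_second_moments(3,4)[OF \<F>\<theta> nonneg(2) weight_square_integrable(2)[OF int]]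
  have "(\<integral>\<omega>. (norm (weight_x R k \<omega>))\<^sup>2 \<partial>M) \<le> (\<integral>\<omega>. 4 * (\<gamma> k)\<^sup>2 * Ax * loc_lyap R k \<omega> \<partial>M)"
    by (rule integral_mono[OF weight_square_integrable(1)[OF int] Hx weight_x_norm_square_le])
  then have "\<nu>x\<^sup>2 * (\<integral>\<omega>. (norm (weight_x R k \<omega>))\<^sup>2 \<partial>M) \<le> \<nu>x\<^sup>2 * (4 * (\<gamma> k)\<^sup>2 * Ax * (\<integral>\<omega>. loc_lyap R k \<omega> \<partial>M))"
    by (intro mult_left_mono) simp_all
  with mx show "integrable M (\<lambda>\<omega>. (norm (weight_x R k \<omega>))\<^sup>2 * (norm (w k \<omega>))\<^sup>2)"
    "(\<integral>\<omega>. (norm (weight_x R k \<omega>))\<^sup>2 * (norm (w k \<omega>))\<^sup>2 \<partial>M) \<le> \<nu>x\<^sup>2 * (4 * (\<gamma> k)\<^sup>2 * Ax * (\<integral>\<omega>. loc_lyap R k \<omega> \<partial>M))"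
    by simp_all
  have "(\<integral>\<omega>. (norm (weight_\<theta> R k \<omega>))\<^sup>2 \<partial>M) \<le> (\<integral>\<omega>. 4 * (q * \<gamma> k)\<^sup>2 * A\<theta> * loc_lyap R k \<omega> \<partial>M)"
    by (rule integral_mono[OF weight_square_integrable(2)[OF int] H\<theta> weight_\<theta>_norm_square_le])
  then have "\<nu>\<theta>\<^sup>2 * (\<integral>\<omega>. (norm (weight_\<theta> R k \<omega>))\<^sup>2 \<partial>M) \<le> \<nu>\<theta>\<^sup>2 * (4 * (q * \<gamma> k)\<^sup>2 * A\<theta> * (\<integral>\<omega>. loc_lyap R k \<omega> \<partial>M))"
    by (intro mult_left_mono) simp_all
  with m\<theta> show "integrable M (\<lambda>\<omega>. (norm (weight_\<theta> R k \<omega>))\<^sup>2 * (norm (v k \<omega>))\<^sup>2)"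
    "(\<integral>\<omega>. (norm (weight_\<theta> R k \<omega>))\<^sup>2 * (norm (v k \<omega>))\<^sup>2 \<partial>M) \<le> \<nu>\<theta>\<^sup>2 * (4 * (q * \<gamma> k)\<^sup>2 * A\<theta> * (\<integral>\<omega>. loc_lyap R k \<omega> \<partial>M))"
    by simp_all
qed

lemma loc_cross_second_moment:
  assumes int: "integrable M (loc_lyap R k)"
  shows "integrable M (\<lambda>\<omega>. (loc_cross R k \<omega>)\<^sup>2)"
    and "(\<integral>\<omega>. (loc_cross R k \<omega>)\<^sup>2 \<partial>M) \<le> cross_bound * (\<gamma> k)\<^sup>2 * (\<integral>\<omega>. loc_lyap R k \<omega> \<partial>M)"
proof -
  note wn = weighted_noise_square_le[OF int]
  define H where "H \<omega> = 2 * ((norm (weight_x R k \<omega>))\<^sup>2 * (norm (w k \<omega>))\<^sup>2)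
    + 2 * ((norm (weight_\<theta> R k \<omega>))\<^sup>2 * (norm (v k \<omega>))\<^sup>2)" for \<omega>
  have H_int: "integrable M H" unfolding H_def using wn(1,3) by simp
  have bound: "(loc_cross R k \<omega>)\<^sup>2 \<le> H \<omega>" for \<omega>
  proof -
    have "\<bar>weight_x R k \<omega> \<bullet> w k \<omega>\<bar> \<le> \<bar>norm (weight_x R k \<omega>) * norm (w k \<omega>)\<bar>"
      "\<bar>weight_\<theta> R k \<omega> \<bullet> v k \<omega>\<bar> \<le> \<bar>norm (weight_\<theta> R k \<omega>) * norm (v k \<omega>)\<bar>"
      using Cauchy_Schwarz_ineq2 by simp_all
    then have "(weight_x R k \<omega> \<bullet> w k \<omega>)\<^sup>2 \<le> (norm (weight_x R k \<omega>))\<^sup>2 * (norm (w k \<omega>))\<^sup>2"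
      "(weight_\<theta> R k \<omega> \<bullet> v k \<omega>)\<^sup>2 \<le> (norm (weight_\<theta> R k \<omega>))\<^sup>2 * (norm (v k \<omega>))\<^sup>2"
      by (simp_all only: abs_le_square_iff power_mult_distrib)
    moreover have "(a + b)\<^sup>2 \<le> 2 * a\<^sup>2 + 2 * b\<^sup>2" for a b :: real
      using zero_le_power2[of "a - b"] by (simp add: power2_diff power2_sum)
    ultimately show ?thesis unfolding loc_cross_eq H_def by (smt (verit))
  qed
  have meas: "(\<lambda>\<omega>. (loc_cross R k \<omega>)\<^sup>2) \<in> borel_measurable M"
    using \<F>_measurable_imp_measurable[OF loc_cross_measurable] by (rule borel_measurable_power)
  note dom = integrable_nonneg_dominated[OF H_int meas zero_le_power2 bound]
  show "integrable M (\<lambda>\<omega>. (loc_cross R k \<omega>)\<^sup>2)" using dom by simp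
  have "(\<integral>\<omega>. H \<omega> \<partial>M) \<le> 2 * (\<nu>x\<^sup>2 * (4 * (\<gamma> k)\<^sup>2 * Ax * (\<integral>\<omega>. loc_lyap R k \<omega> \<partial>M)))
      + 2 * (\<nu>\<theta>\<^sup>2 * (4 * (q * \<gamma> k)\<^sup>2 * A\<theta> * (\<integral>\<omega>. loc_lyap R k \<omega> \<partial>M)))"
    unfolding H_def using wn by simp
  also have "\<dots> = cross_bound * (\<gamma> k)\<^sup>2 * (\<integral>\<omega>. loc_lyap R k \<omega> \<partial>M)"
    by (simp add: cross_bound_def power_mult_distrib algebra_simps)
  finally show "(\<integral>\<omega>. (loc_cross R k \<omega>)\<^sup>2 \<partial>M) \<le> cross_bound * (\<gamma> k)\<^sup>2 * (\<integral>\<omega>. loc_lyap R k \<omega> \<partial>M)"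
    using dom by simp
qed

lemma loc_lyap_step:
  assumes int: "integrable M (loc_lyap R k)"
  shows "integrable M (loc_lyap R (Suc k))"
    and "(\<integral>\<omega>. loc_lyap R (Suc k) \<omega> \<partial>M)
      \<le> (1 + quad * (\<gamma> k)\<^sup>2) * (\<integral>\<omega>. loc_lyap R k \<omega> \<partial>M) + noise_bound * (\<gamma> k)\<^sup>2"
proof -
  note cross = loc_cross_cond_exp_zero[OF int]
  have "(\<integral>\<omega>. loc_cross R k \<omega> \<partial>M) = (\<integral>\<omega>. real_cond_exp M (\<F> k) (loc_cross R k) \<omega> \<partial>M)"
    using sigma_finite_subalgebra.real_cond_exp_int(2)[OF sub_\<F> cross(1)] by simp
  also have "\<dots> = 0" by (rule integral_eq_zero_AE[OF cross(2)])
  finally have cross_mean: "(\<integral>\<omega>. loc_cross R k \<omega> \<partial>M) = 0" .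
  define H where "H \<omega> = (1 + quad * (\<gamma> k)\<^sup>2) * loc_lyap R k \<omega> + loc_cross R k \<omega> + noise_sq k \<omega>" for \<omega>
  have H_int: "integrable M H" unfolding H_def using int cross(1) noise_sq_integrable by simp
  have "loc_lyap R (Suc k) \<omega> \<le> H \<omega>" if \<omega>: "\<omega> \<in> space M" for \<omega>
  proof (cases "\<omega> \<in> start_set R")
    case True
    have "0 \<le> rate * \<gamma> k * lyap k \<omega>"
      using \<gamma>_pos[of k] lyap_nonneg q \<mu>x \<mu>\<theta> by (simp add: rate_def)
    then show ?thesis
      using True lyap_step[OF \<omega>, of k] by (simp add: H_def loc_lyap_def loc_cross_def algebra_simps)
  qed (simp add: H_def loc_lyap_def loc_cross_def noise_sq_def)
  note dom = integrable_nonneg_dominated[OF H_int _ loc_lyap_nonneg this]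
  have loc_lyap_M: "loc_lyap R (Suc k) \<in> borel_measurable M"
    using \<F>_measurable_imp_measurable localized_measurable(1) by blast
  show "integrable M (loc_lyap R (Suc k))" using dom(1)[OF loc_lyap_M] .
  have "(\<integral>\<omega>. H \<omega> \<partial>M) = (1 + quad * (\<gamma> k)\<^sup>2) * (\<integral>\<omega>. loc_lyap R k \<omega> \<partial>M) + (\<integral>\<omega>. noise_sq k \<omega> \<partial>M)"
    unfolding H_def using int cross(1) noise_sq_integrable cross_mean by simp
  with dom(2)[OF loc_lyap_M] noise_sq_integral_le[of k]
  show "(\<integral>\<omega>. loc_lyap R (Suc k) \<omega> \<partial>M)
      \<le> (1 + quad * (\<gamma> k)\<^sup>2) * (\<integral>\<omega>. loc_lyap R k \<omega> \<partial>M) + noise_bound * (\<gamma> k)\<^sup>2"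
    by linarith
qed

lemma loc_lyap_integrable: "integrable M (loc_lyap R k)"
proof (induction k)
  case 0
  have "loc_lyap R 0 \<omega> \<le> real R" for \<omega>
    by (cases "\<omega> \<in> start_set R") (auto simp: loc_lyap_def start_set_def)
  then show ?case
    by (intro integrable_nonneg_dominated(1)[OF integrable_const
          \<F>_measurable_imp_measurable[OF localized_measurable(1)] loc_lyap_nonneg])
qed (rule loc_lyap_step(1))

lemma loc_lyap_integral_le: "(\<integral>\<omega>. loc_lyap R k \<omega> \<partial>M) \<le> (real R + noise_bound * \<Gamma>) * exp (quad * \<Gamma>)"
proof -
  let ?u = "\<lambda>k. \<integral>\<omega>. loc_lyap R k \<omega> \<partial>M"
  have u0: "?u 0 \<le> real R"
  proof -
    have "loc_lyap R 0 \<omega> \<le> real R" for \<omega>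
      by (cases "\<omega> \<in> start_set R") (auto simp: loc_lyap_def start_set_def)
    then show ?thesis
      using integral_mono[OF loc_lyap_integrable, of "\<lambda>_. real R" R 0] by (simp add: prob_space)
  qed
  have partial: "(\<Sum>j<k. (\<gamma> j)\<^sup>2) \<le> \<Gamma>" unfolding \<Gamma>_def by (rule sum_le_suminf[OF \<gamma>_sq]) auto
  have nonneg: "0 \<le> quad" "0 \<le> noise_bound" by (simp_all add: quad_def noise_bound_def)
  have "?u k \<le> (?u 0 + (\<Sum>j<k. noise_bound * (\<gamma> j)\<^sup>2)) * exp (\<Sum>j<k. quad * (\<gamma> j)\<^sup>2)"
    using loc_lyap_step(2)[OF loc_lyap_integrable] nonneg
    by (intro discrete_gronwall) (auto intro: integral_nonneg_AE loc_lyap_nonneg)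
  also have "\<dots> \<le> (real R + noise_bound * \<Gamma>) * exp (quad * \<Gamma>)"
    using u0 partial nonneg \<Gamma>_nonneg
    by (intro mult_mono add_mono) (auto simp: sum_distrib_left[symmetric] mult_left_mono
        intro: add_nonneg_nonneg integral_nonneg_AE loc_lyap_nonneg sum_nonneg)
  finally show ?thesis .
qed

lemma loc_cross_summable_AE: "AE \<omega> in M. summable (\<lambda>k. loc_cross R k \<omega>)"
proof (rule martingale_difference_summable_AE[where F = \<F> and \<zeta> = "loc_cross R",
      OF prob_space_axioms sub_\<F> mono_\<F> loc_cross_measurable])
  show "integrable M (\<lambda>\<omega>. (loc_cross R k \<omega>)\<^sup>2)" for k
    by (rule loc_cross_second_moment(1)[OF loc_lyap_integrable])
  show "AE \<omega> in M. real_cond_exp M (\<F> k) (loc_cross R k) \<omega> = 0" for k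
    by (rule loc_cross_cond_exp_zero(2)[OF loc_lyap_integrable])
  let ?U = "(real R + noise_bound * \<Gamma>) * exp (quad * \<Gamma>)"
  show "summable (\<lambda>k. \<integral>\<omega>. (loc_cross R k \<omega>)\<^sup>2 \<partial>M)"
  proof (rule summable_comparison_test'[OF summable_mult[OF \<gamma>_sq, of "cross_bound * ?U"]])
    have "0 \<le> cross_bound" using \<Gamma>_nonneg by (simp add: cross_bound_def Ax_def A\<theta>_def)
    then have le: "cross_bound * (\<gamma> k)\<^sup>2 * (\<integral>\<omega>. loc_lyap R k \<omega> \<partial>M) \<le> cross_bound * (\<gamma> k)\<^sup>2 * ?U" for k
      by (intro mult_left_mono loc_lyap_integral_le) simp
    show "norm (\<integral>\<omega>. (loc_cross R k \<omega>)\<^sup>2 \<partial>M) \<le> cross_bound * ?U * (\<gamma> k)\<^sup>2" for k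
      using order_trans[OF loc_cross_second_moment(2)[OF loc_lyap_integrable] le[of k]]
      by (simp add: mult_ac)
  qed
qed

lemma cross_summable_AE: "AE \<omega> in M. summable (\<lambda>k. cross k \<omega>)"
proof -
  have "AE \<omega> in M. \<forall>R. summable (\<lambda>k. loc_cross R k \<omega>)"
    using loc_cross_summable_AE by (subst AE_all_countable) auto
  then show ?thesis
  proof (rule AE_mp[OF _ AE_I2[OF impI]])
    fix \<omega> assume \<omega>: "\<omega> \<in> space M" and sum: "\<forall>R. summable (\<lambda>k. loc_cross R k \<omega>)"
    have "\<omega> \<in> start_set (nat \<lceil>lyap 0 \<omega>\<rceil>)"
      using \<omega> real_nat_ceiling_ge[of "lyap 0 \<omega>"] by (simp add: start_set_def)
    then show "summable (\<lambda>k. cross k \<omega>)"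
      using sum[rule_format, of "nat \<lceil>lyap 0 \<omega>\<rceil>"] by (simp add: loc_cross_def)
  qed
qed

lemma noise_sq_summable_AE: "AE \<omega> in M. summable (\<lambda>k. noise_sq k \<omega>)"
proof -
  have [measurable]: "noise_sq k \<in> borel_measurable M" for k
    using noise_sq_integrable by (rule borel_measurable_integrable)
  have nonneg: "noise_sq k \<omega> \<ge> 0" for k \<omega> by (simp add: noise_sq_def)
  have "(\<integral>\<^sup>+\<omega>. (\<Sum>k. ennreal (noise_sq k \<omega>)) \<partial>M) = (\<Sum>k. \<integral>\<^sup>+\<omega>. ennreal (noise_sq k \<omega>) \<partial>M)"
    by (rule nn_integral_suminf) measurable
  also have "\<dots> \<le> (\<Sum>k. ennreal (noise_bound * (\<gamma> k)\<^sup>2))"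
    using nn_integral_eq_integral[OF noise_sq_integrable] noise_sq_integral_le nonneg
    by (intro suminf_le) (auto intro: ennreal_leI)
  also have "\<dots> = ennreal (\<Sum>k. noise_bound * (\<gamma> k)\<^sup>2)"
    using summable_mult[OF \<gamma>_sq, of noise_bound] by (intro suminf_ennreal2) (auto simp: noise_bound_def)
  finally have "(\<integral>\<^sup>+\<omega>. (\<Sum>k. ennreal (noise_sq k \<omega>)) \<partial>M) \<noteq> \<infinity>"
    by (auto simp: top_unique)
  then have "AE \<omega> in M. (\<Sum>k. ennreal (noise_sq k \<omega>)) \<noteq> \<infinity>"
    by (intro nn_integral_noteq_infinite) measurable
  then show ?thesis
    by eventually_elim (intro summable_suminf_not_top; simp add: nonneg)
qed

theorem iterates_tendsto_AE:
  "AE \<omega> in M. (\<lambda>k. x k \<omega>) \<longlonglongrightarrow> xs \<and> (\<lambda>k. \<theta> k \<omega>) \<longlonglongrightarrow> \<theta>s"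
  using cross_summable_AE noise_sq_summable_AE AE_space
proof eventually_elim
  case (elim \<omega>)
  have rate: "rate > 0" using \<mu>x \<mu>\<theta> q by (simp add: rate_def)
  have "(\<lambda>k. lyap k \<omega>) \<longlonglongrightarrow> 0"
    using perturbed_recursion_tendsto_zero[OF lyap_nonneg \<gamma>_pos rate \<gamma>_sum \<gamma>_sq elim(1,2) lyap_step[OF elim(3)]] .
  then have root: "(\<lambda>k. sqrt (lyap k \<omega>)) \<longlonglongrightarrow> 0" using tendsto_real_sqrt by fastforce
  have "norm (x k \<omega> - xs) \<le> sqrt (lyap k \<omega>)" "norm (\<theta> k \<omega> - \<theta>s) \<le> sqrt (lyap k \<omega>)" for k
    by (auto intro!: real_le_rsqrt simp: lyap_def)
  then have "(\<lambda>k. x k \<omega> - xs) \<longlonglongrightarrow> 0" "(\<lambda>k. \<theta> k \<omega> - \<theta>s) \<longlonglongrightarrow> 0"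
    by (auto intro!: Lim_null_comparison[OF always_eventually root])
  then show ?case by (simp add: LIM_zero_cancel)
qed

end

theorem proposition2p5:
  fixes M :: "'w measure"
    and X :: "'a::euclidean_space set" and \<Theta> :: "'b::euclidean_space set"
    and f :: "'a \<Rightarrow> 'b \<Rightarrow> real" and g :: "'b \<Rightarrow> real"
    and gradx :: "'a \<Rightarrow> 'b \<Rightarrow> 'a" and gradg :: "'b \<Rightarrow> 'b"
    and sgx :: "'a \<Rightarrow> 'b \<Rightarrow> 'sx \<Rightarrow> 'a" and sgg :: "'b \<Rightarrow> 'sy \<Rightarrow> 'b"
    and \<xi> :: "nat \<Rightarrow> 'w \<Rightarrow> 'sx" and \<eta> :: "nat \<Rightarrow> 'w \<Rightarrow> 'sy"
    and x :: "nat \<Rightarrow> 'w \<Rightarrow> 'a" and \<theta> :: "nat \<Rightarrow> 'w \<Rightarrow> 'b"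
    and w :: "nat \<Rightarrow> 'w \<Rightarrow> 'a" and v :: "nat \<Rightarrow> 'w \<Rightarrow> 'b"
    and \<gamma>x \<gamma>\<theta> :: "nat \<Rightarrow> real"
    and \<mu>x \<mu>\<theta> Lx L\<theta> C\<theta> \<nu>x \<nu>\<theta> :: real
  assumes M: "prob_space M"
    and X: "X \<noteq> {}" "closed X" "convex X"
    and \<Theta>: "\<Theta> \<noteq> {}" "closed \<Theta>" "convex \<Theta>"
    \<comment> \<open>(A1-1)(i)\<close>
    and \<mu>x: "\<mu>x > 0"
    and f_sc: "\<And>t. t \<in> \<Theta> \<Longrightarrow> strongly_convex_on X (\<lambda>y. f y t) \<mu>x"
    and f_deriv: "\<And>t y. t \<in> \<Theta> \<Longrightarrow> y \<in> X \<Longrightarrow>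
        ((\<lambda>z. f z t) has_derivative (\<lambda>h. gradx y t \<bullet> h)) (at y)"
    and f_cont: "\<And>t. t \<in> \<Theta> \<Longrightarrow> continuous_on X (\<lambda>y. gradx y t)"
    and f_Lx: "\<And>t y z. t \<in> \<Theta> \<Longrightarrow> y \<in> X \<Longrightarrow> z \<in> X \<Longrightarrow>
        norm (gradx y t - gradx z t) \<le> Lx * norm (y - z)"
    \<comment> \<open>(A1-1)(ii)\<close>
    and f_Lt: "\<And>y t s. y \<in> X \<Longrightarrow> t \<in> \<Theta> \<Longrightarrow> s \<in> \<Theta> \<Longrightarrow>
        norm (gradx y t - gradx y s) \<le> L\<theta> * norm (t - s)"
    \<comment> \<open>(A1-1)(iii)\<close>
    and \<mu>\<theta>: "\<mu>\<theta> > 0"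
    and g_sc: "strongly_convex_on \<Theta> g \<mu>\<theta>"
    and g_deriv: "\<And>t. t \<in> \<Theta> \<Longrightarrow> (g has_derivative (\<lambda>h. gradg t \<bullet> h)) (at t)"
    and g_cont: "continuous_on \<Theta> gradg"
    and g_C: "\<And>t s. t \<in> \<Theta> \<Longrightarrow> s \<in> \<Theta> \<Longrightarrow> norm (gradg t - gradg s) \<le> C\<theta> * norm (t - s)"
    \<comment> \<open>positive steplengths and (A2-1)\<close>
    and \<gamma>x_pos: "\<And>k. \<gamma>x k > 0" and \<gamma>\<theta>_pos: "\<And>k. \<gamma>\<theta> k > 0"
    and \<gamma>x_sum: "\<not> summable \<gamma>x"
    and \<gamma>x_sq: "summable (\<lambda>k. (\<gamma>x k)\<^sup>2)"
    and \<gamma>\<theta>_def: "\<And>k. \<gamma>\<theta> k = \<gamma>x k * L\<theta>\<^sup>2 / (\<mu>x * \<mu>\<theta>)"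
    \<comment> \<open>the scheme: initial points, samples, noise, recursion\<close>
    and x0: "x 0 \<in> borel_measurable M" "\<And>\<omega>. \<omega> \<in> space M \<Longrightarrow> x 0 \<omega> \<in> X"
    and \<theta>0: "\<theta> 0 \<in> borel_measurable M" "\<And>\<omega>. \<omega> \<in> space M \<Longrightarrow> \<theta> 0 \<omega> \<in> \<Theta>"
    and w_def: "\<And>k \<omega>. w k \<omega> = sgx (x k \<omega>) (\<theta> k \<omega>) (\<xi> k \<omega>) - gradx (x k \<omega>) (\<theta> k \<omega>)"
    and v_def: "\<And>k \<omega>. v k \<omega> = sgg (\<theta> k \<omega>) (\<eta> k \<omega>) - gradg (\<theta> k \<omega>)"
    and w_meas: "\<And>k. w k \<in> borel_measurable M"
    and v_meas: "\<And>k. v k \<in> borel_measurable M"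
    and x_rec: "\<And>k \<omega>. x (Suc k) \<omega> = closest_point X (x k \<omega> - \<gamma>x k *\<^sub>R (gradx (x k \<omega>) (\<theta> k \<omega>) + w k \<omega>))"
    and \<theta>_rec: "\<And>k \<omega>. \<theta> (Suc k) \<omega> = closest_point \<Theta> (\<theta> k \<omega> - \<gamma>\<theta> k *\<^sub>R (gradg (\<theta> k \<omega>) + v k \<omega>))"
    \<comment> \<open>(A3), with F k the sigma-field generated by x 0, theta 0, w l, v l (l < k)\<close>
    and w_mean: "\<And>k b. b \<in> Basis \<Longrightarrow> AE \<omega> in M.
        real_cond_exp M (noise_filtration M (x 0) (\<theta> 0) w v k) (\<lambda>\<omega>. w k \<omega> \<bullet> b) \<omega> = 0"
    and v_mean: "\<And>k b. b \<in> Basis \<Longrightarrow> AE \<omega> in M.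
        real_cond_exp M (noise_filtration M (x 0) (\<theta> 0) w v k) (\<lambda>\<omega>. v k \<omega> \<bullet> b) \<omega> = 0"
    and w_var: "\<And>k. AE \<omega> in M.
        nn_cond_exp M (noise_filtration M (x 0) (\<theta> 0) w v k) (\<lambda>\<omega>. ennreal ((norm (w k \<omega>))\<^sup>2)) \<omega> \<le> ennreal (\<nu>x\<^sup>2)"
    and v_var: "\<And>k. AE \<omega> in M.
        nn_cond_exp M (noise_filtration M (x 0) (\<theta> 0) w v k) (\<lambda>\<omega>. ennreal ((norm (v k \<omega>))\<^sup>2)) \<omega> \<le> ennreal (\<nu>\<theta>\<^sup>2)"
  shows "\<exists>\<theta>s xs. \<theta>s \<in> \<Theta> \<and> (\<forall>t\<in>\<Theta>. g \<theta>s \<le> g t) \<and> (\<forall>t\<in>\<Theta>. (\<forall>s\<in>\<Theta>. g t \<le> g s) \<longrightarrow> t = \<theta>s)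
     \<and> xs \<in> X \<and> (\<forall>y\<in>X. f xs \<theta>s \<le> f y \<theta>s) \<and> (\<forall>y\<in>X. (\<forall>z\<in>X. f y \<theta>s \<le> f z \<theta>s) \<longrightarrow> y = xs)
     \<and> (AE \<omega> in M. (\<lambda>k. x k \<omega>) \<longlonglongrightarrow> xs \<and> (\<lambda>k. \<theta> k \<omega>) \<longlonglongrightarrow> \<theta>s)"
proof -
  define q where "q = L\<theta>\<^sup>2 / (\<mu>x * \<mu>\<theta>)"
  have \<gamma>\<theta>_q: "\<gamma>\<theta> k = q * \<gamma>x k" for k by (simp add: \<gamma>\<theta>_def q_def)
  have q: "q > 0" using \<gamma>\<theta>_pos[of 0] \<gamma>x_pos[of 0] by (simp add: \<gamma>\<theta>_q zero_less_mult_iff)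
  have q_large: "L\<theta>\<^sup>2 \<le> q * \<mu>x * \<mu>\<theta>" using \<mu>x \<mu>\<theta> by (simp add: q_def)
  have \<theta>_rec': "\<theta> (Suc k) \<omega> = closest_point \<Theta> (\<theta> k \<omega> - (q * \<gamma>x k) *\<^sub>R (gradg (\<theta> k \<omega>) + v k \<omega>))"
    for k \<omega> using \<theta>_rec by (simp add: \<gamma>\<theta>_q)
  interpret coupled_projected_sa M X \<Theta> f g gradx gradg x \<theta> w v \<gamma>x q \<mu>x \<mu>\<theta> Lx L\<theta> C\<theta> \<nu>x \<nu>\<theta>
    by (intro coupled_projected_sa.intro[OF M] coupled_projected_sa_axioms.intro)
      (fact X \<Theta> \<mu>x f_sc f_deriv f_Lx f_Lt \<mu>\<theta> g_sc g_deriv g_cont g_C \<gamma>x_pos \<gamma>x_sum \<gamma>x_sq q q_large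
        x0 \<theta>0 w_meas v_meas x_rec \<theta>_rec' w_mean v_mean w_var v_var)+
  show ?thesis using theta_star(1-3) x_star(1-3) iterates_tendsto_AE by blast
qed

end
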